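(* Let $0<\alpha<1$, let $H$ be an $\alpha$-stable subordinator, i.e. $\mathbf{E}_0[e^{-\lambda H_t}]=e^{-t\lambda^\alpha}$ for $\lambda>0$, and let $L_t=\inf\{s\ge0: H_s>t\}$ be its inverse. (i) If $0<\beta<1/\alpha$, then $\mathbf{E}_0[(L_t)^\beta]=\frac{\Gamma(\beta+1)}{\Gamma(\beta\alpha+1)}t^{\alpha\beta}$ for all $t>0$. (ii) Let $X$ be a Markov process on a domain $D$ with lifetime $\zeta$, independent of $H$, and let $\zeta^L$ be the lifetime of the time-changed process $X^L=X\circ L$. If $0<\beta<\alpha$ and $\mathbf{E}_x[\zeta^{\beta/\alpha}]<\infty$, then $$\mathbf{P}_x(\zeta^L>t)\le\left(\frac{\Gamma(1-\beta/\alpha)}{\Gamma(1-\beta)}\,\mathbf{E}_x[\zeta^{\beta/\alpha}]\right)t^{-\beta},\qquad t>0.$$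
   Context: The lifetime of $X$ is $\zeta=\inf\{t>0: X_t\notin D\}$ (after which $X$ sits in a cemetery point); $X^L_t=X_{L_t}$ and $\zeta^L$ is its lifetime. *)

theory Defs
  imports "HOL-Analysis.Analysis" "HOL-Probability.Probability"
begin

definition epow :: "ennreal \<Rightarrow> real \<Rightarrow> ennreal" where
  "epow z p = (if z = \<top> then \<top> else ennreal (enn2real z powr p))"

definition stable_subordinator :: "'w measure \<Rightarrow> real \<Rightarrow> (real \<Rightarrow> 'w \<Rightarrow> real) \<Rightarrow> bool" where
  "stable_subordinator M \<alpha> H \<longleftrightarrow>
     prob_space M \<and>
     (\<forall>t. H t \<in> borel_measurable M) \<and>
     (\<forall>\<omega>\<in>space M. H 0 \<omega> = 0) \<and>
     (\<forall>\<omega>\<in>space M. mono_on {0..} (\<lambda>t. H t \<omega>)) \<and>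
     (\<forall>\<omega>\<in>space M. \<forall>t\<ge>0. continuous (at_right t) (\<lambda>s. H s \<omega>)) \<and>
     (\<forall>(ts :: nat \<Rightarrow> real) n. 0 \<le> ts 0 \<and> mono ts \<longrightarrow>
        prob_space.indep_vars M (\<lambda>_. borel) (\<lambda>i \<omega>. H (ts (Suc i)) \<omega> - H (ts i) \<omega>) {..<n}) \<and>
     (\<forall>s t. 0 \<le> s \<and> 0 \<le> t \<longrightarrow>
        distr M borel (\<lambda>\<omega>. H (s + t) \<omega> - H s \<omega>) = distr M borel (H t)) \<and>
     (\<forall>t\<ge>0. \<forall>l>0. (\<integral>\<omega>. exp (- l * H t \<omega>) \<partial>M) = exp (- t * l powr \<alpha>))"

definition inverse_subordinator :: "(real \<Rightarrow> 'w \<Rightarrow> real) \<Rightarrow> real \<Rightarrow> 'w \<Rightarrow> ennreal" where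
  "inverse_subordinator H t \<omega> = Inf {ennreal s | s. 0 \<le> s \<and> H s \<omega> > t}"

definition lifetime :: "'d set \<Rightarrow> (real \<Rightarrow> 'w \<Rightarrow> 'd) \<Rightarrow> 'w \<Rightarrow> ennreal" where
  "lifetime D X \<omega> = Inf {ennreal t | t. 0 < t \<and> X t \<omega> \<notin> D}"

(* time-changed process X^L_t = X_{L_t}; at L_t = \<infinity> the process is in the cemetery c *)
definition time_change :: "'d \<Rightarrow> (real \<Rightarrow> 'w \<Rightarrow> 'd) \<Rightarrow> (real \<Rightarrow> 'w \<Rightarrow> real) \<Rightarrow> real \<Rightarrow> 'w \<Rightarrow> 'd" where
  "time_change c X H t \<omega> =
     (if inverse_subordinator H t \<omega> = \<top> then c
      else X (enn2real (inverse_subordinator H t \<omega>)) \<omega>)"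

definition natural_filtration :: "'w measure \<Rightarrow> 'd measure \<Rightarrow> (real \<Rightarrow> 'w \<Rightarrow> 'd) \<Rightarrow> real \<Rightarrow> 'w measure" where
  "natural_filtration M S X s =
     sigma (space M) (\<Union>u\<in>{0..s}. {X u -` A \<inter> space M | A. A \<in> sets S})"

definition markov_process :: "('d \<Rightarrow> 'w measure) \<Rightarrow> 'd measure \<Rightarrow> (real \<Rightarrow> 'w \<Rightarrow> 'd) \<Rightarrow> bool" where
  "markov_process P S X \<longleftrightarrow>
     (\<forall>x\<in>space S. prob_space (P x)) \<and>
     (\<forall>x\<in>space S. \<forall>y\<in>space S. sets (P x) = sets (P y)) \<and>
     (\<forall>x\<in>space S. \<forall>t\<ge>0. X t \<in> measurable (P x) S) \<and>
     (\<forall>x\<in>space S. AE \<omega> in P x. X 0 \<omega> = x) \<and>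
     (\<forall>y\<in>space S. \<forall>A\<in>sets (P y). (\<lambda>x. emeasure (P x) A) \<in> borel_measurable S) \<and>
     (\<forall>x\<in>space S. \<forall>s\<ge>0. \<forall>t\<ge>0. \<forall>f::'d \<Rightarrow> real. f \<in> borel_measurable S \<and> bounded (range f) \<longrightarrow>
        (AE \<omega> in P x. real_cond_exp (P x) (natural_filtration (P x) S X s) (\<lambda>\<omega>. f (X (s + t) \<omega>)) \<omega>
                       = (\<integral>\<omega>'. f (X t \<omega>') \<partial>(P (X s \<omega>)))))"

definition independent_processes ::
  "'w measure \<Rightarrow> 'd measure \<Rightarrow> (real \<Rightarrow> 'w \<Rightarrow> 'd) \<Rightarrow> 'e measure \<Rightarrow> (real \<Rightarrow> 'w \<Rightarrow> 'e) \<Rightarrow> bool" where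
  "independent_processes M S X T Y \<longleftrightarrow>
     prob_space.indep_set M
       (sets (vimage_algebra (space M) (\<lambda>\<omega>. \<lambda>t\<in>{0..}. X t \<omega>) (PiM {0..} (\<lambda>_. S))))
       (sets (vimage_algebra (space M) (\<lambda>\<omega>. \<lambda>t\<in>{0..}. Y t \<omega>) (PiM {0..} (\<lambda>_. T))))"

end

theory Submission
  imports Defs
begin

(* If H is a stable subordinator and L its inverse, then L_t > s exactly when H_s < t, up to the
   boundary event H_s = t. Since H_s has the law of s^(1/alpha) H_1 (both have Laplace transform
   exp (-s l^alpha), and the Laplace transform determines the law by Stone-Weierstrass), L_t has the
   law of (t / H_1)^alpha. Hence E[L_t^beta] = t^(alpha beta) E[H_1^(-alpha beta)], and the negative
   moment is computed from Gamma(gamma) w^(-gamma) = int l^(gamma-1) exp (-l w) dl and Tonelli.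

   The time-changed process is still alive at time t only if the clock has not yet reached the
   lifetime: zeta^L > t implies L_t < zeta. The clock L and the lifetime zeta are independent, so
   P(L_t < zeta) = int P(L_t < z) dP_zeta(z), and P(L_t < z) <= P(H_z > t) <= t^(-beta) E[H_z^beta]
   by Markov's inequality, where E[H_z^beta] = Gamma(1 - beta/alpha)/Gamma(1 - beta) z^(beta/alpha)
   by the representation y^beta = beta/Gamma(1-beta) int (1 - exp (-l y)) l^(-beta-1) dl. *)

section \<open>Integrals of powers on the half-line\<close>

lemma powr_less_powr_iff:
  fixes a x y :: real
  assumes "0 < a" "0 \<le> x" "0 \<le> y"
  shows "x powr a < y powr a \<longleftrightarrow> x < y"
  using assms powr_less_mono2[of a x y] powr_mono2[of a y x] by (metis less_imp_le not_le)

lemma Union_Icc_powr_eq_Ioi: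
  fixes a r :: real
  assumes a: "0 < a" and r: "0 < r"
  shows "(\<Union>n. {a * (1 / Suc n) powr r .. a * real (Suc n) powr r}) = {0<..}"
proof (intro equalityI subsetI)
  fix x :: real
  assume "x \<in> {0<..}"
  define y where "y = (x / a) powr (1 / r)"
  have y: "0 < y" "x / a = y powr r"
    using a r \<open>x \<in> {0<..}\<close> by (simp_all add: y_def powr_powr)
  obtain n :: nat where "1 / y < n" "y < n"
    using reals_Archimedean2[of "max (1 / y) y"] by auto
  then have "1 / Suc n \<le> y" "y \<le> Suc n"
    using y by (auto simp: field_simps)
  then have "(1 / Suc n) powr r \<le> x / a" "x / a \<le> real (Suc n) powr r"
    unfolding y(2) using r y(1) by (auto intro!: powr_mono2)
  then show "x \<in> (\<Union>n. {a * (1 / Suc n) powr r .. a * real (Suc n) powr r})"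
    using a by (auto simp: field_simps)
next
  fix x
  assume "x \<in> (\<Union>n. {a * (1 / Suc n) powr r .. a * real (Suc n) powr r})"
  then obtain n where "a * (1 / Suc n) powr r \<le> x"
    by auto
  moreover have "0 < a * (1 / Suc n) powr r"
    using a by simp
  ultimately show "x \<in> {0<..}"
    by simp
qed

lemma nn_integral_Union_incseq:
  assumes "incseq A" "\<And>n. A n \<in> sets M" "f \<in> borel_measurable M"
  shows "(\<integral>\<^sup>+x. f x * indicator (\<Union>n. A n) x \<partial>M) = (SUP n. \<integral>\<^sup>+x. f x * indicator (A n) x \<partial>M)"
proof -
  have "(SUP n. emeasure (density M f) (A n)) = emeasure (density M f) (\<Union>n. A n)"
    using assms by (intro SUP_emeasure_incseq) auto
  moreover have "(\<Union>n. A n) \<in> sets M"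
    using assms(2) by auto
  ultimately show ?thesis
    using assms by (simp add: emeasure_density)
qed

lemma nn_integral_powr_substitution:
  fixes f :: "real \<Rightarrow> real" and a r :: real
  assumes f[measurable]: "f \<in> borel_measurable borel" and a: "0 < a" and r: "0 < r"
  shows "(\<integral>\<^sup>+x. ennreal (f x) * indicator {0<..} x \<partial>lborel) =
         (\<integral>\<^sup>+y. ennreal (f (a * y powr r) * (a * r * y powr (r - 1))) * indicator {0<..} y \<partial>lborel)"
proof -
  define g where "g y = a * y powr r" for y
  define g' where "g' y = a * r * y powr (r - 1)" for y
  define I where "I n = {1 / Suc n .. real (Suc n)}" for n :: nat
  define J where "J n = {g (1 / Suc n) .. g (Suc n)}" for n :: nat
  have [measurable]: "g \<in> borel_measurable borel" "g' \<in> borel_measurable borel"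
    unfolding g_def g'_def by measurable
  have [measurable]: "I n \<in> sets borel" "J n \<in> sets borel" for n
    unfolding I_def J_def by auto
  have g_mono: "g x \<le> g y" if "0 < x" "x \<le> y" for x y
    using that a r by (auto simp: g_def intro!: powr_mono2)
  have I_incseq: "incseq I"
    by (auto simp: incseq_def I_def frac_le intro: order.trans[of _ "1 / Suc _"])
  have J_incseq: "incseq J"
    by (auto simp: incseq_def J_def intro!: g_mono frac_le order.trans[OF g_mono])
  have Union: "(\<Union>n. I n) = {0<..}" "(\<Union>n. J n) = {0<..}"
    using Union_Icc_powr_eq_Ioi[of 1 1] Union_Icc_powr_eq_Ioi[OF a r] by (simp_all add: I_def J_def g_def)
  have on_J: "(\<integral>\<^sup>+x. ennreal (f x) * indicator (J n) x \<partial>lborel) =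
      (\<integral>\<^sup>+y. ennreal (f (g y) * g' y) * indicator (I n) y \<partial>lborel)" for n
  proof -
    have "(\<integral>\<^sup>+x. ennreal (f x) * indicator (J n) x \<partial>lborel) =
          (\<integral>\<^sup>+x. ennreal (f x * indicator (J n) x) \<partial>lborel)"
      by (intro nn_integral_cong) (auto simp: indicator_def)
    also have "\<dots> = (\<integral>\<^sup>+y. ennreal (f (g y) * g' y * indicator (I n) y) \<partial>lborel)"
      unfolding I_def J_def g_def g'_def using a r
      by (intro nn_integral_substitution)
         (auto intro!: derivative_eq_intros continuous_intros simp: set_borel_measurable_def
           intro: less_le_trans[of 0 "1 / Suc n"] order.trans[of _ 1])
    also have "\<dots> = (\<integral>\<^sup>+y. ennreal (f (g y) * g' y) * indicator (I n) y \<partial>lborel)"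
      by (intro nn_integral_cong) (auto simp: indicator_def)
    finally show ?thesis .
  qed
  have "(\<integral>\<^sup>+x. ennreal (f x) * indicator {0<..} x \<partial>lborel)
      = (SUP n. \<integral>\<^sup>+x. ennreal (f x) * indicator (J n) x \<partial>lborel)"
    unfolding Union(2)[symmetric] using J_incseq by (intro nn_integral_Union_incseq) auto
  also have "\<dots> = (SUP n. \<integral>\<^sup>+y. ennreal (f (g y) * g' y) * indicator (I n) y \<partial>lborel)"
    by (simp add: on_J)
  also have "\<dots> = (\<integral>\<^sup>+y. ennreal (f (g y) * g' y) * indicator {0<..} y \<partial>lborel)"
    unfolding Union(1)[symmetric] using I_incseq by (intro nn_integral_Union_incseq[symmetric]) auto
  finally show ?thesis
    by (simp add: g_def g'_def)
qed

lemma nn_integral_powr_Ioo: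
  fixes \<beta> c :: real
  assumes \<beta>: "0 < \<beta>" and c: "0 \<le> c"
  shows "(\<integral>\<^sup>+x. ennreal (\<beta> * x powr (\<beta> - 1)) * indicator {0<..<c} x \<partial>lborel) = ennreal (c powr \<beta>)"
proof -
  have "x powr \<beta> < c powr \<beta> \<longleftrightarrow> x < c" if "0 < x" for x
    using that c powr_less_powr_iff[OF \<beta>, of x c] by simp
  then have "(\<integral>\<^sup>+x. ennreal (\<beta> * x powr (\<beta> - 1)) * indicator {0<..<c} x \<partial>lborel) =
      (\<integral>\<^sup>+x. ennreal (indicator {..<c powr \<beta>} (1 * x powr \<beta>) * (1 * \<beta> * x powr (\<beta> - 1)))
         * indicator {0<..} x \<partial>lborel)"
    by (intro nn_integral_cong) (auto simp: indicator_def)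
  also have "\<dots> = (\<integral>\<^sup>+x. ennreal (indicator {..<c powr \<beta>} x) * indicator {0<..} x \<partial>lborel)"
    using \<beta> by (intro nn_integral_powr_substitution[symmetric]) auto
  also have "\<dots> = (\<integral>\<^sup>+x. indicator {0<..<c powr \<beta>} x \<partial>lborel)"
    by (intro nn_integral_cong) (auto simp: indicator_def)
  finally show ?thesis by simp
qed

lemma nn_integral_powr_Ioi:
  fixes \<beta> :: real
  assumes \<beta>: "0 < \<beta>"
  shows "(\<integral>\<^sup>+x. ennreal (\<beta> * x powr (\<beta> - 1)) * indicator {0<..} x \<partial>lborel) = \<top>"
proof -
  have "of_nat n \<le> (\<integral>\<^sup>+x. ennreal (\<beta> * x powr (\<beta> - 1)) * indicator {0<..} x \<partial>lborel)" for n
  proof -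
    have "(of_nat n :: ennreal) = ennreal ((real n powr (1 / \<beta>)) powr \<beta>)"
      using \<beta> by (simp add: powr_powr ennreal_of_nat_eq_real_of_nat)
    also have "\<dots> = (\<integral>\<^sup>+x. ennreal (\<beta> * x powr (\<beta> - 1)) * indicator {0<..<real n powr (1 / \<beta>)} x \<partial>lborel)"
      using \<beta> by (simp add: nn_integral_powr_Ioo)
    also have "\<dots> \<le> (\<integral>\<^sup>+x. ennreal (\<beta> * x powr (\<beta> - 1)) * indicator {0<..} x \<partial>lborel)"
      by (intro nn_integral_mono mult_left_mono) (auto simp: indicator_def)
    finally show ?thesis .
  qed
  then have "(SUP n. of_nat n :: ennreal) \<le> (\<integral>\<^sup>+x. ennreal (\<beta> * x powr (\<beta> - 1)) * indicator {0<..} x \<partial>lborel)"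
    by (rule SUP_least)
  then show ?thesis
    by (simp add: ennreal_SUP_of_nat_eq_top top_unique)
qed

lemma nn_integral_Gamma_real:
  fixes c :: real
  assumes "0 < c"
  shows "(\<integral>\<^sup>+y. ennreal (y powr (c - 1) * exp (- y)) * indicator {0<..} y \<partial>lborel) = ennreal (Gamma c)"
  unfolding Gamma_conv_nn_integral_real[OF assms]
  by (intro nn_integral_cong) (auto simp: indicator_def exp_minus field_simps)

lemma nn_integral_powr_exp_powr:
  fixes \<gamma> u \<alpha> :: real
  assumes \<gamma>: "0 < \<gamma>" and u: "0 < u" and \<alpha>: "0 < \<alpha>"
  shows "(\<integral>\<^sup>+x. ennreal (x powr (\<gamma> - 1) * exp (- u * x powr \<alpha>)) * indicator {0<..} x \<partial>lborel)
           = ennreal (Gamma (\<gamma> / \<alpha>) / \<alpha> * u powr (- \<gamma> / \<alpha>))"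
proof -
  define a where "a = u powr (- 1 / \<alpha>)"
  have a: "0 < a" using u by (simp add: a_def)
  have integrand: "(a * y powr (1 / \<alpha>)) powr (\<gamma> - 1) * exp (- u * (a * y powr (1 / \<alpha>)) powr \<alpha>)
      * (a * (1 / \<alpha>) * y powr (1 / \<alpha> - 1))
      = u powr (- \<gamma> / \<alpha>) / \<alpha> * (y powr (\<gamma> / \<alpha> - 1) * exp (- y))" if y: "0 < y" for y
  proof -
    have "a powr \<alpha> = 1 / u"
      using u \<alpha> by (simp add: a_def powr_powr powr_neg_one)
    then have "u * (a * y powr (1 / \<alpha>)) powr \<alpha> = y"
      using u y a \<alpha> by (simp add: powr_mult powr_powr)
    moreover have "(a * y powr (1 / \<alpha>)) powr (\<gamma> - 1) * (a * y powr (1 / \<alpha> - 1))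
        = u powr (- \<gamma> / \<alpha>) * y powr (\<gamma> / \<alpha> - 1)"
    proof -
      have "(a * y powr (1 / \<alpha>)) powr (\<gamma> - 1) * (a * y powr (1 / \<alpha> - 1))
          = (a powr (\<gamma> - 1) * a powr 1) * (y powr ((\<gamma> - 1) / \<alpha>) * y powr (1 / \<alpha> - 1))"
        using a y by (simp add: powr_mult powr_powr)
      also have "\<dots> = a powr ((\<gamma> - 1) + 1) * y powr ((\<gamma> - 1) / \<alpha> + (1 / \<alpha> - 1))"
        by (simp only: powr_add)
      also have "\<dots> = u powr (- \<gamma> / \<alpha>) * y powr (\<gamma> / \<alpha> - 1)"
        using u \<alpha> by (simp add: a_def powr_powr diff_divide_distrib)
      finally show ?thesis .
    qed
    ultimately show ?thesis by (simp add: field_simps)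
  qed
  have "(\<integral>\<^sup>+x. ennreal (x powr (\<gamma> - 1) * exp (- u * x powr \<alpha>)) * indicator {0<..} x \<partial>lborel)
      = (\<integral>\<^sup>+y. ennreal ((a * y powr (1 / \<alpha>)) powr (\<gamma> - 1) * exp (- u * (a * y powr (1 / \<alpha>)) powr \<alpha>)
           * (a * (1 / \<alpha>) * y powr (1 / \<alpha> - 1))) * indicator {0<..} y \<partial>lborel)"
    using a \<alpha> by (intro nn_integral_powr_substitution) auto
  also have "\<dots> = (\<integral>\<^sup>+y. ennreal (u powr (- \<gamma> / \<alpha>) / \<alpha>)
                     * (ennreal (y powr (\<gamma> / \<alpha> - 1) * exp (- y)) * indicator {0<..} y) \<partial>lborel)"
  proof (intro nn_integral_cong)
    fix y :: real
    show "ennreal ((a * y powr (1 / \<alpha>)) powr (\<gamma> - 1) * exp (- u * (a * y powr (1 / \<alpha>)) powr \<alpha>)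
           * (a * (1 / \<alpha>) * y powr (1 / \<alpha> - 1))) * indicator {0<..} y
        = ennreal (u powr (- \<gamma> / \<alpha>) / \<alpha>) * (ennreal (y powr (\<gamma> / \<alpha> - 1) * exp (- y)) * indicator {0<..} y)"
    proof (cases "0 < y")
      case True
      then show ?thesis
        unfolding integrand[OF True] using u \<alpha> by (subst ennreal_mult) auto
    qed simp
  qed
  also have "\<dots> = ennreal (u powr (- \<gamma> / \<alpha>) / \<alpha>) * ennreal (Gamma (\<gamma> / \<alpha>))"
    using \<gamma> \<alpha> by (subst nn_integral_cmult) (simp_all add: nn_integral_Gamma_real)
  also have "\<dots> = ennreal (Gamma (\<gamma> / \<alpha>) / \<alpha> * u powr (- \<gamma> / \<alpha>))"
    using \<gamma> \<alpha> u by (simp add: ennreal_mult[symmetric] Gamma_real_pos less_imp_le mult.commute)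
  finally show ?thesis .
qed

lemma nn_integral_exp_Icc:
  fixes c y :: real
  assumes c: "0 \<le> c" and y: "0 \<le> y"
  shows "(\<integral>\<^sup>+u. ennreal (c * exp (- c * u)) * indicator {0..y} u \<partial>lborel) = ennreal (1 - exp (- c * y))"
proof -
  have "((\<lambda>u. c * exp (- c * u)) has_integral (- exp (- c * y)) - (- exp (- c * 0))) {0..y}"
    using y by (intro fundamental_theorem_of_calculus)
      (auto intro!: derivative_eq_intros simp: has_real_derivative_iff_has_vector_derivative[symmetric])
  then show ?thesis
    using c by (simp add: nn_integral_has_integral_lebesgue')
qed

lemma nn_integral_one_minus_exp_powr_iterated:
  fixes \<alpha> \<beta> s :: real
  assumes s: "0 \<le> s"
  shows "(\<integral>\<^sup>+l. ennreal ((1 - exp (- s * l powr \<alpha>)) * l powr (- \<beta> - 1)) * indicator {0<..} l \<partial>lborel)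
       = (\<integral>\<^sup>+u. (\<integral>\<^sup>+l. ennreal (l powr (\<alpha> - \<beta> - 1) * exp (- u * l powr \<alpha>)) * indicator {0<..} l \<partial>lborel)
                * indicator {0..s} u \<partial>lborel)"
proof -
  define F where
    "F l u = ennreal (l powr (\<alpha> - \<beta> - 1) * exp (- u * l powr \<alpha>)) * indicator {0<..} l * indicator {0..s} u"
    for l u :: real
  have "(\<integral>\<^sup>+u. F l u \<partial>lborel) = ennreal ((1 - exp (- s * l powr \<alpha>)) * l powr (- \<beta> - 1)) * indicator {0<..} l" for l
  proof (cases "0 < l")
    case True
    have "l powr (\<alpha> - \<beta> - 1) * exp (- u * l powr \<alpha>) = l powr (- \<beta> - 1) * (l powr \<alpha> * exp (- (l powr \<alpha>) * u))" for u
      by (simp add: powr_add[symmetric] algebra_simps)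
    then have "F l u
        = ennreal (l powr (- \<beta> - 1)) * (ennreal (l powr \<alpha> * exp (- (l powr \<alpha>) * u)) * indicator {0..s} u)" for u
      unfolding F_def using True by (simp add: ennreal_mult mult.assoc)
    then have "(\<integral>\<^sup>+u. F l u \<partial>lborel) = ennreal (l powr (- \<beta> - 1))
        * (\<integral>\<^sup>+u. ennreal (l powr \<alpha> * exp (- (l powr \<alpha>) * u)) * indicator {0..s} u \<partial>lborel)"
      by (simp add: nn_integral_cmult)
    then show ?thesis
      using True s nn_integral_exp_Icc[of "l powr \<alpha>" s] by (simp add: ennreal_mult mult_ac)
  qed (simp add: F_def)
  then have "(\<integral>\<^sup>+l. ennreal ((1 - exp (- s * l powr \<alpha>)) * l powr (- \<beta> - 1)) * indicator {0<..} l \<partial>lborel)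
      = (\<integral>\<^sup>+l. \<integral>\<^sup>+u. F l u \<partial>lborel \<partial>lborel)"
    by simp
  also have "\<dots> = (\<integral>\<^sup>+u. \<integral>\<^sup>+l. F l u \<partial>lborel \<partial>lborel)"
    unfolding F_def by (rule lborel_pair.Fubini'[symmetric]) measurable
  finally show ?thesis
    by (simp add: F_def nn_integral_multc)
qed

lemma nn_integral_one_minus_exp_powr:
  fixes \<alpha> \<beta> s :: real
  assumes \<beta>: "0 < \<beta>" "\<beta> < \<alpha>" and s: "0 \<le> s"
  shows "(\<integral>\<^sup>+l. ennreal ((1 - exp (- s * l powr \<alpha>)) * l powr (- \<beta> - 1)) * indicator {0<..} l \<partial>lborel)
       = ennreal (Gamma (1 - \<beta> / \<alpha>) / \<beta> * s powr (\<beta> / \<alpha>))"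
proof -
  have \<alpha>: "0 < \<alpha>"
    using \<beta> by simp
  have Gamma_pos: "0 < Gamma (1 - \<beta> / \<alpha>)"
    using \<beta> by (intro Gamma_real_pos) (simp add: field_simps)
  have exponents: "(\<alpha> - \<beta>) / \<alpha> = 1 - \<beta> / \<alpha>" "- (\<alpha> - \<beta>) / \<alpha> = \<beta> / \<alpha> - 1"
    using \<alpha> by (auto simp: field_simps)
  have inner: "(\<integral>\<^sup>+l. ennreal (l powr (\<alpha> - \<beta> - 1) * exp (- u * l powr \<alpha>)) * indicator {0<..} l \<partial>lborel)
      = ennreal (Gamma (1 - \<beta> / \<alpha>) / \<beta>) * ennreal (\<beta> / \<alpha> * u powr (\<beta> / \<alpha> - 1))" if u: "0 < u" for u
  proof -
    have "(\<integral>\<^sup>+l. ennreal (l powr (\<alpha> - \<beta> - 1) * exp (- u * l powr \<alpha>)) * indicator {0<..} l \<partial>lborel)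
        = ennreal (Gamma ((\<alpha> - \<beta>) / \<alpha>) / \<alpha> * u powr (- (\<alpha> - \<beta>) / \<alpha>))"
      using u \<alpha> \<beta> by (intro nn_integral_powr_exp_powr) auto
    also have "\<dots> = ennreal (Gamma (1 - \<beta> / \<alpha>) / \<beta>) * ennreal (\<beta> / \<alpha> * u powr (\<beta> / \<alpha> - 1))"
      unfolding exponents using \<alpha> \<beta> Gamma_pos by (simp add: ennreal_mult[symmetric])
    finally show ?thesis .
  qed
  have "(\<integral>\<^sup>+l. ennreal ((1 - exp (- s * l powr \<alpha>)) * l powr (- \<beta> - 1)) * indicator {0<..} l \<partial>lborel)
      = (\<integral>\<^sup>+u. ennreal (Gamma (1 - \<beta> / \<alpha>) / \<beta>)
                 * (ennreal (\<beta> / \<alpha> * u powr (\<beta> / \<alpha> - 1)) * indicator {0<..<s} u) \<partial>lborel)"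
    unfolding nn_integral_one_minus_exp_powr_iterated[OF s]
  proof (intro nn_integral_cong_AE)
    show "AE u in lborel.
        (\<integral>\<^sup>+l. ennreal (l powr (\<alpha> - \<beta> - 1) * exp (- u * l powr \<alpha>)) * indicator {0<..} l \<partial>lborel) * indicator {0..s} u
        = ennreal (Gamma (1 - \<beta> / \<alpha>) / \<beta>) * (ennreal (\<beta> / \<alpha> * u powr (\<beta> / \<alpha> - 1)) * indicator {0<..<s} u)"
      using AE_lborel_singleton[of 0] AE_lborel_singleton[of s]
    proof eventually_elim
      case (elim u)
      then show ?case
        by (cases "0 < u \<and> u < s") (simp_all only: inner, auto simp: indicator_def)
    qed
  qed
  also have "\<dots> = ennreal (Gamma (1 - \<beta> / \<alpha>) / \<beta>) * ennreal (s powr (\<beta> / \<alpha>))"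
    using \<alpha> \<beta> s nn_integral_powr_Ioo[of "\<beta> / \<alpha>" s] by (subst nn_integral_cmult) auto
  also have "\<dots> = ennreal (Gamma (1 - \<beta> / \<alpha>) / \<beta> * s powr (\<beta> / \<alpha>))"
    using Gamma_pos \<beta> by (simp add: ennreal_mult'[symmetric])
  finally show ?thesis .
qed

lemma powr_eq_nn_integral_one_minus_exp:
  fixes \<beta> y :: real
  assumes \<beta>: "0 < \<beta>" "\<beta> < 1" and y: "0 \<le> y"
  shows "ennreal (y powr \<beta>) = ennreal (\<beta> / Gamma (1 - \<beta>)) *
     (\<integral>\<^sup>+l. ennreal ((1 - exp (- l * y)) * l powr (- \<beta> - 1)) * indicator {0<..} l \<partial>lborel)"
proof -
  have Gamma_pos: "0 < Gamma (1 - \<beta>)"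
    using \<beta> by (intro Gamma_real_pos) simp
  have "(\<integral>\<^sup>+l. ennreal ((1 - exp (- l * y)) * l powr (- \<beta> - 1)) * indicator {0<..} l \<partial>lborel)
      = (\<integral>\<^sup>+l. ennreal ((1 - exp (- y * l powr 1)) * l powr (- \<beta> - 1)) * indicator {0<..} l \<partial>lborel)"
    by (intro nn_integral_cong) (auto simp: indicator_def mult.commute)
  also have "\<dots> = ennreal (Gamma (1 - \<beta> / 1) / \<beta> * y powr (\<beta> / 1))"
    using \<beta> y by (intro nn_integral_one_minus_exp_powr) auto
  also have "\<dots> = ennreal (Gamma (1 - \<beta>) / \<beta> * y powr \<beta>)"
    by (simp only: div_by_1)
  also have "ennreal (\<beta> / Gamma (1 - \<beta>)) * \<dots> = ennreal (y powr \<beta>)"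
    using \<beta> Gamma_pos by (simp add: ennreal_mult[symmetric] less_imp_neq[symmetric])
  finally show ?thesis ..
qed

lemma powr_inverse_mult_less_iff:
  fixes a s w t :: real
  assumes a: "0 < a" and s: "0 < s" and w: "0 < w" and t: "0 < t"
  shows "s powr (1 / a) * w < t \<longleftrightarrow> s < (t / w) powr a"
    and "s powr (1 / a) * w \<le> t \<longleftrightarrow> s \<le> (t / w) powr a"
proof -
  have inverse: "(s powr (1 / a)) powr a = s"
    using a s by (simp add: powr_powr)
  have nonneg: "0 \<le> s powr (1 / a)" "0 \<le> t / w"
    using w t by simp_all
  have "s powr (1 / a) * w < t \<longleftrightarrow> s powr (1 / a) < t / w"
    using w by (simp add: pos_less_divide_eq)
  also have "\<dots> \<longleftrightarrow> s < (t / w) powr a"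
    using powr_less_powr_iff[OF a nonneg] by (simp only: inverse)
  finally show "s powr (1 / a) * w < t \<longleftrightarrow> s < (t / w) powr a" .
  have "s powr (1 / a) * w \<le> t \<longleftrightarrow> \<not> t / w < s powr (1 / a)"
    using w by (simp add: pos_le_divide_eq not_less)
  also have "\<dots> \<longleftrightarrow> s \<le> (t / w) powr a"
    using powr_less_powr_iff[OF a nonneg(2,1)] unfolding inverse by auto
  finally show "s powr (1 / a) * w \<le> t \<longleftrightarrow> s \<le> (t / w) powr a" .
qed

section \<open>Layer cake representation\<close>

lemma borel_measurable_epow [measurable]: "(\<lambda>z. epow z p) \<in> borel_measurable borel"
  unfolding epow_def by measurable

lemma epow_eq_nn_integral_powr:
  fixes \<beta> :: real
  assumes \<beta>: "0 < \<beta>"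
  shows epow_eq_nn_integral_powr_less:
      "epow z \<beta> = (\<integral>\<^sup>+s. ennreal (\<beta> * s powr (\<beta> - 1)) * indicator {0<..} s * indicator {s. ennreal s < z} s \<partial>lborel)"
    and epow_eq_nn_integral_powr_le:
      "epow z \<beta> = (\<integral>\<^sup>+s. ennreal (\<beta> * s powr (\<beta> - 1)) * indicator {0<..} s * indicator {s. ennreal s \<le> z} s \<partial>lborel)"
proof -
  have "epow z \<beta> = (\<integral>\<^sup>+s. ennreal (\<beta> * s powr (\<beta> - 1)) * indicator {0<..} s * indicator {s. ennreal s < z} s \<partial>lborel) \<and>
        epow z \<beta> = (\<integral>\<^sup>+s. ennreal (\<beta> * s powr (\<beta> - 1)) * indicator {0<..} s * indicator {s. ennreal s \<le> z} s \<partial>lborel)"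
  proof (cases z)
    case (real l)
    have "AE s in lborel. ennreal (\<beta> * s powr (\<beta> - 1)) * indicator {0<..} s * indicator {s. ennreal s < z} s
        = ennreal (\<beta> * s powr (\<beta> - 1)) * indicator {0<..<l} s"
      "AE s in lborel. ennreal (\<beta> * s powr (\<beta> - 1)) * indicator {0<..} s * indicator {s. ennreal s \<le> z} s
        = ennreal (\<beta> * s powr (\<beta> - 1)) * indicator {0<..<l} s"
      using AE_lborel_singleton[of l] real by (auto elim!: eventually_mono simp: indicator_def ennreal_less_iff)
    then show ?thesis
      using real \<beta> by (simp add: nn_integral_cong_AE nn_integral_powr_Ioo epow_def)
  next
    case top
    then show ?thesis
      using \<beta> by (simp add: nn_integral_powr_Ioi epow_def)
  qed
  then show "epow z \<beta> = (\<integral>\<^sup>+s. ennreal (\<beta> * s powr (\<beta> - 1)) * indicator {0<..} s * indicator {s. ennreal s < z} s \<partial>lborel)"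
    and "epow z \<beta> = (\<integral>\<^sup>+s. ennreal (\<beta> * s powr (\<beta> - 1)) * indicator {0<..} s * indicator {s. ennreal s \<le> z} s \<partial>lborel)"
    by blast+
qed

lemma (in sigma_finite_measure) nn_integral_epow_layer_cake:
  fixes Z :: "'a \<Rightarrow> ennreal" and \<beta> :: real
  assumes Z[measurable]: "Z \<in> borel_measurable M" and \<beta>: "0 < \<beta>"
  shows nn_integral_epow_eq_tail_less: "(\<integral>\<^sup>+\<omega>. epow (Z \<omega>) \<beta> \<partial>M) =
      (\<integral>\<^sup>+s. ennreal (\<beta> * s powr (\<beta> - 1)) * indicator {0<..} s * emeasure M {\<omega>\<in>space M. ennreal s < Z \<omega>} \<partial>lborel)"
    and nn_integral_epow_eq_tail_le: "(\<integral>\<^sup>+\<omega>. epow (Z \<omega>) \<beta> \<partial>M) =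
      (\<integral>\<^sup>+s. ennreal (\<beta> * s powr (\<beta> - 1)) * indicator {0<..} s * emeasure M {\<omega>\<in>space M. ennreal s \<le> Z \<omega>} \<partial>lborel)"
proof -
  interpret pair_sigma_finite M lborel ..
  define c where "c s = ennreal (\<beta> * s powr (\<beta> - 1)) * indicator {0<..} s" for s :: real
  have [measurable]: "c \<in> borel_measurable borel"
    unfolding c_def by measurable
  have Tonelli: "(\<integral>\<^sup>+\<omega>. (\<integral>\<^sup>+s. c s * indicator {s. R (ennreal s) (Z \<omega>)} s \<partial>lborel) \<partial>M) =
      (\<integral>\<^sup>+s. c s * emeasure M {\<omega>\<in>space M. R (ennreal s) (Z \<omega>)} \<partial>lborel)"
    if R[measurable]: "Measurable.pred (borel \<Otimes>\<^sub>M borel) (\<lambda>(x, y). R x y)" for R :: "ennreal \<Rightarrow> ennreal \<Rightarrow> bool"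
  proof -
    have [measurable]: "Measurable.pred (M \<Otimes>\<^sub>M lborel) (\<lambda>p. R (ennreal (snd p)) (Z (fst p)))"
      using measurable_compose[OF measurable_Pair[OF measurable_compose[OF measurable_snd measurable_ennreal]
          measurable_compose[OF measurable_fst Z]] R] by (simp add: comp_def)
    have "(\<integral>\<^sup>+\<omega>. (\<integral>\<^sup>+s. c s * indicator {s. R (ennreal s) (Z \<omega>)} s \<partial>lborel) \<partial>M) =
        (\<integral>\<^sup>+s. (\<integral>\<^sup>+\<omega>. c s * indicator {\<omega>\<in>space M. R (ennreal s) (Z \<omega>)} \<omega> \<partial>M) \<partial>lborel)"
      by (subst Fubini') (auto intro!: nn_integral_cong simp: indicator_def)
    also have "\<dots> = (\<integral>\<^sup>+s. c s * emeasure M {\<omega>\<in>space M. R (ennreal s) (Z \<omega>)} \<partial>lborel)"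
      by (simp add: nn_integral_cmult_indicator)
    finally show ?thesis .
  qed
  show "(\<integral>\<^sup>+\<omega>. epow (Z \<omega>) \<beta> \<partial>M) =
      (\<integral>\<^sup>+s. ennreal (\<beta> * s powr (\<beta> - 1)) * indicator {0<..} s * emeasure M {\<omega>\<in>space M. ennreal s < Z \<omega>} \<partial>lborel)"
    using Tonelli[of "(<)"] epow_eq_nn_integral_powr_less[OF \<beta>] by (simp add: c_def)
  show "(\<integral>\<^sup>+\<omega>. epow (Z \<omega>) \<beta> \<partial>M) =
      (\<integral>\<^sup>+s. ennreal (\<beta> * s powr (\<beta> - 1)) * indicator {0<..} s * emeasure M {\<omega>\<in>space M. ennreal s \<le> Z \<omega>} \<partial>lborel)"
    using Tonelli[of "(\<le>)"] epow_eq_nn_integral_powr_le[OF \<beta>] by (simp add: c_def)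
qed

lemma (in sigma_finite_measure) nn_integral_epow_eq_of_tail_bounds:
  fixes L Z :: "'a \<Rightarrow> ennreal" and \<beta> :: real
  assumes L: "L \<in> borel_measurable M" and Z: "Z \<in> borel_measurable M" and \<beta>: "0 < \<beta>"
    and lower: "\<And>s. 0 < s \<Longrightarrow> emeasure M {\<omega>\<in>space M. ennreal s < Z \<omega>} \<le> emeasure M {\<omega>\<in>space M. ennreal s < L \<omega>}"
    and upper: "\<And>s. 0 < s \<Longrightarrow> emeasure M {\<omega>\<in>space M. ennreal s < L \<omega>} \<le> emeasure M {\<omega>\<in>space M. ennreal s \<le> Z \<omega>}"
  shows "(\<integral>\<^sup>+\<omega>. epow (L \<omega>) \<beta> \<partial>M) = (\<integral>\<^sup>+\<omega>. epow (Z \<omega>) \<beta> \<partial>M)"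
proof (rule antisym)
  show "(\<integral>\<^sup>+\<omega>. epow (L \<omega>) \<beta> \<partial>M) \<le> (\<integral>\<^sup>+\<omega>. epow (Z \<omega>) \<beta> \<partial>M)"
    unfolding nn_integral_epow_eq_tail_less[OF L \<beta>] nn_integral_epow_eq_tail_le[OF Z \<beta>]
    using upper by (intro nn_integral_mono) (auto simp: indicator_def intro: mult_left_mono)
  show "(\<integral>\<^sup>+\<omega>. epow (Z \<omega>) \<beta> \<partial>M) \<le> (\<integral>\<^sup>+\<omega>. epow (L \<omega>) \<beta> \<partial>M)"
    unfolding nn_integral_epow_eq_tail_less[OF L \<beta>] nn_integral_epow_eq_tail_less[OF Z \<beta>]
    using lower by (intro nn_integral_mono) (auto simp: indicator_def intro: mult_left_mono)
qed

section \<open>Laplace transforms and independence\<close>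

lemma (in prob_space) integrable_continuous_unit_interval:
  fixes X :: "'a \<Rightarrow> real" and g :: "real \<Rightarrow> real"
  assumes X: "X \<in> borel_measurable M" "\<And>\<omega>. \<omega> \<in> space M \<Longrightarrow> X \<omega> \<in> {0..1}"
    and g: "continuous_on UNIV g"
  shows "integrable M (\<lambda>\<omega>. g (X \<omega>))"
proof -
  have "bounded (g ` {0..1})"
    using g by (intro compact_imp_bounded compact_continuous_image continuous_on_subset[OF g]) auto
  then obtain B where B: "\<And>x. x \<in> {0..1} \<Longrightarrow> \<bar>g x\<bar> \<le> B"
    unfolding bounded_real by blast
  have "(\<lambda>\<omega>. g (X \<omega>)) \<in> borel_measurable M"
    using X(1) borel_measurable_continuous_onI[OF g] by (rule measurable_compose)
  then show ?thesis
    using B X(2) by (intro integrable_const_bound[where B=B] AE_I2) auto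
qed

lemma (in prob_space) abs_expectation_diff_le_uniform:
  fixes X :: "'a \<Rightarrow> real" and f g :: "real \<Rightarrow> real"
  assumes X: "X \<in> borel_measurable M" "\<And>\<omega>. \<omega> \<in> space M \<Longrightarrow> X \<omega> \<in> {0..1}"
    and f: "continuous_on UNIV f" and g: "continuous_on UNIV g"
    and close: "\<And>x. x \<in> {0..1} \<Longrightarrow> \<bar>f x - g x\<bar> \<le> e"
  shows "\<bar>expectation (\<lambda>\<omega>. f (X \<omega>)) - expectation (\<lambda>\<omega>. g (X \<omega>))\<bar> \<le> e"
proof -
  have int_f: "integrable M (\<lambda>\<omega>. f (X \<omega>))"
    using X f by (rule integrable_continuous_unit_interval)
  have int_g: "integrable M (\<lambda>\<omega>. g (X \<omega>))"
    using X g by (rule integrable_continuous_unit_interval)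
  have "\<bar>expectation (\<lambda>\<omega>. f (X \<omega>)) - expectation (\<lambda>\<omega>. g (X \<omega>))\<bar> = \<bar>expectation (\<lambda>\<omega>. f (X \<omega>) - g (X \<omega>))\<bar>"
    using int_f int_g by simp
  also have "\<dots> \<le> expectation (\<lambda>\<omega>. \<bar>f (X \<omega>) - g (X \<omega>)\<bar>)"
    by (rule integral_abs_bound)
  also have "\<dots> \<le> expectation (\<lambda>_. e)"
    using int_f int_g close X(2) by (intro integral_mono) auto
  finally show ?thesis
    by (simp add: prob_space)
qed

lemma (in prob_space) integral_continuous_eq_if_moments_eq:
  fixes U V :: "'a \<Rightarrow> real" and f :: "real \<Rightarrow> real"
  assumes U: "U \<in> borel_measurable M" "\<And>\<omega>. \<omega> \<in> space M \<Longrightarrow> U \<omega> \<in> {0..1}"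
    and V: "V \<in> borel_measurable M" "\<And>\<omega>. \<omega> \<in> space M \<Longrightarrow> V \<omega> \<in> {0..1}"
    and moments: "\<And>n. expectation (\<lambda>\<omega>. U \<omega> ^ n) = expectation (\<lambda>\<omega>. V \<omega> ^ n)"
    and f: "continuous_on UNIV f"
  shows "expectation (\<lambda>\<omega>. f (U \<omega>)) = expectation (\<lambda>\<omega>. f (V \<omega>))"
proof -
  have close: "\<bar>expectation (\<lambda>\<omega>. f (U \<omega>)) - expectation (\<lambda>\<omega>. f (V \<omega>))\<bar> \<le> 2 * e" if e: "0 < e" for e
  proof -
    obtain p :: "real \<Rightarrow> real" where p: "polynomial_function p" "\<forall>x\<in>{0..1}. norm (f x - p x) < e"
      using Stone_Weierstrass_polynomial_function[OF compact_Icc[of 0 1] continuous_on_subset[OF f] e]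
      by blast
    then obtain a n where p_eq: "p = (\<lambda>x. \<Sum>i\<le>n. a i * x ^ i)"
      using real_polynomial_function_eq real_polynomial_function_iff_sum by metis
    have p_cont: "continuous_on UNIV p"
      unfolding p_eq by (intro continuous_intros)
    have expectation_p: "expectation (\<lambda>\<omega>. p (X \<omega>)) = (\<Sum>i\<le>n. a i * expectation (\<lambda>\<omega>. X \<omega> ^ i))"
      if X: "X \<in> borel_measurable M" "\<And>\<omega>. \<omega> \<in> space M \<Longrightarrow> X \<omega> \<in> {0..1}" for X
    proof -
      have "integrable M (\<lambda>\<omega>. X \<omega> ^ i)" for i
        using integrable_continuous_unit_interval[of X "\<lambda>x. x ^ i"] X by (simp add: continuous_intros)
      then show ?thesis
        unfolding p_eq by (simp add: Bochner_Integration.integral_sum)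
    qed
    have approx: "\<bar>expectation (\<lambda>\<omega>. f (X \<omega>)) - expectation (\<lambda>\<omega>. p (X \<omega>))\<bar> \<le> e"
      if "X \<in> borel_measurable M" "\<And>\<omega>. \<omega> \<in> space M \<Longrightarrow> X \<omega> \<in> {0..1}" for X
      using that f p_cont p(2) by (intro abs_expectation_diff_le_uniform) (auto intro: less_imp_le)
    have "expectation (\<lambda>\<omega>. p (U \<omega>)) = expectation (\<lambda>\<omega>. p (V \<omega>))"
      using U V by (simp add: expectation_p moments)
    with approx[OF U] approx[OF V] show ?thesis
      by linarith
  qed
  have "\<bar>expectation (\<lambda>\<omega>. f (U \<omega>)) - expectation (\<lambda>\<omega>. f (V \<omega>))\<bar> \<le> 0"
  proof (rule field_le_epsilon)
    fix e :: real
    assume "0 < e"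
    then show "\<bar>expectation (\<lambda>\<omega>. f (U \<omega>)) - expectation (\<lambda>\<omega>. f (V \<omega>))\<bar> \<le> 0 + e"
      using close[of "e / 2"] by simp
  qed
  then show ?thesis
    by simp
qed

lemma LIMSEQ_clamp_indicator_atMost:
  fixes a x :: real
  shows "(\<lambda>k. max 0 (min 1 (1 - real k * (x - a)))) \<longlonglongrightarrow> indicator {..a} x"
proof (cases "x \<le> a")
  case True
  then have "max 0 (min 1 (1 - real k * (x - a))) = 1" for k
    by (simp add: mult_nonneg_nonpos)
  with True show ?thesis
    by simp
next
  case False
  obtain N :: nat where N: "1 / (x - a) < N"
    using reals_Archimedean2 by blast
  have "max 0 (min 1 (1 - real k * (x - a))) = 0" if "N \<le> k" for k
  proof -
    have "1 / (x - a) < real k"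
      using N that of_nat_le_iff[of N k] by linarith
    then have "1 < real k * (x - a)"
      using False by (simp add: divide_less_eq)
    then show ?thesis
      by simp
  qed
  with False show ?thesis
    by (intro tendsto_eventually) (auto simp: eventually_sequentially)
qed

lemma (in prob_space) distr_eq_if_moments_eq:
  fixes U V :: "'a \<Rightarrow> real"
  assumes U: "U \<in> borel_measurable M" "\<And>\<omega>. \<omega> \<in> space M \<Longrightarrow> U \<omega> \<in> {0..1}"
    and V: "V \<in> borel_measurable M" "\<And>\<omega>. \<omega> \<in> space M \<Longrightarrow> V \<omega> \<in> {0..1}"
    and moments: "\<And>n. expectation (\<lambda>\<omega>. U \<omega> ^ n) = expectation (\<lambda>\<omega>. V \<omega> ^ n)"
  shows "distr M borel U = distr M borel V"
proof (rule cdf_unique)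
  show "real_distribution (distr M borel U)" "real_distribution (distr M borel V)"
    using U V by auto
  show "cdf (distr M borel U) = cdf (distr M borel V)"
  proof
    fix a :: real
    define F where "F k x = max 0 (min 1 (1 - real k * (x - a)))" for k :: nat and x
    have F_cont: "continuous_on UNIV (F k)" for k
      unfolding F_def by (intro continuous_intros)
    have cdf_lim: "(\<lambda>k. expectation (\<lambda>\<omega>. F k (X \<omega>))) \<longlonglongrightarrow> cdf (distr M borel X) a"
      if X[measurable]: "X \<in> borel_measurable M" for X
    proof -
      have [measurable]: "F k \<in> borel_measurable borel" for k
        using F_cont by (rule borel_measurable_continuous_onI)
      have "(\<lambda>k. expectation (\<lambda>\<omega>. F k (X \<omega>))) \<longlonglongrightarrow> expectation (\<lambda>\<omega>. indicator {..a} (X \<omega>))"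
        by (rule integral_dominated_convergence[where w="\<lambda>_. 1"])
           (auto simp: F_def LIMSEQ_clamp_indicator_atMost intro!: AE_I2)
      also have "expectation (\<lambda>\<omega>. indicator {..a} (X \<omega>)) = expectation (indicator (X -` {..a} \<inter> space M))"
        by (intro Bochner_Integration.integral_cong) (auto simp: indicator_def)
      also have "\<dots> = cdf (distr M borel X) a"
        by (simp add: cdf_def measure_distr)
      finally show ?thesis .
    qed
    have "(\<lambda>k. expectation (\<lambda>\<omega>. F k (U \<omega>))) = (\<lambda>k. expectation (\<lambda>\<omega>. F k (V \<omega>)))"
      using integral_continuous_eq_if_moments_eq[OF U V moments F_cont] by simp
    then show "cdf (distr M borel U) a = cdf (distr M borel V) a"
      using cdf_lim[OF U(1)] cdf_lim[OF V(1)] LIMSEQ_unique by metis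
  qed
qed

lemma (in prob_space) distr_eq_if_laplace_eq:
  fixes Y W :: "'a \<Rightarrow> real"
  assumes Y[measurable]: "Y \<in> borel_measurable M" "\<And>\<omega>. \<omega> \<in> space M \<Longrightarrow> 0 \<le> Y \<omega>"
    and W[measurable]: "W \<in> borel_measurable M" "\<And>\<omega>. \<omega> \<in> space M \<Longrightarrow> 0 \<le> W \<omega>"
    and laplace: "\<And>l. 0 < l \<Longrightarrow> expectation (\<lambda>\<omega>. exp (- l * Y \<omega>)) = expectation (\<lambda>\<omega>. exp (- l * W \<omega>))"
  shows "distr M borel Y = distr M borel W"
proof -
  have exp_power: "exp (- X \<omega>) ^ n = exp (- real n * X \<omega>)" for X :: "'a \<Rightarrow> real" and \<omega> n
    by (simp add: exp_of_nat_mult[symmetric])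
  have "distr M borel (\<lambda>\<omega>. exp (- Y \<omega>)) = distr M borel (\<lambda>\<omega>. exp (- W \<omega>))"
  proof (rule distr_eq_if_moments_eq)
    fix n :: nat
    show "expectation (\<lambda>\<omega>. exp (- Y \<omega>) ^ n) = expectation (\<lambda>\<omega>. exp (- W \<omega>) ^ n)"
      using laplace[of "real n"] by (cases "n = 0") (simp_all add: exp_power prob_space)
  qed (use Y W in auto)
  moreover have "distr M borel X = distr (distr M borel (\<lambda>\<omega>. exp (- X \<omega>))) borel (\<lambda>u. - ln u)"
    if [measurable]: "X \<in> borel_measurable M" for X :: "'a \<Rightarrow> real"
  proof -
    have "distr (distr M borel (\<lambda>\<omega>. exp (- X \<omega>))) borel (\<lambda>u. - ln u)
        = distr M borel ((\<lambda>u. - ln u) \<circ> (\<lambda>\<omega>. exp (- X \<omega>)))"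
      by (rule distr_distr) measurable
    also have "\<dots> = distr M borel X"
      by (rule distr_cong) auto
    finally show ?thesis ..
  qed
  ultimately show ?thesis
    using Y(1) W(1) by metis
qed

lemma (in prob_space) indep_var_if_indep_set:
  assumes indep: "indep_set (sets A) (sets B)"
    and space: "space A = space M" "space B = space M"
    and X: "X \<in> A \<rightarrow>\<^sub>M S" and Y: "Y \<in> B \<rightarrow>\<^sub>M T"
  shows "indep_var S X T Y"
proof -
  have events: "sets A \<subseteq> events" "sets B \<subseteq> events"
    using indep by (simp_all add: indep_sets2_eq)
  have "X \<in> M \<rightarrow>\<^sub>M S" "Y \<in> M \<rightarrow>\<^sub>M T"
    using measurable_mono[of S S A M] measurable_mono[of T T B M] X Y events space by auto
  moreover have "sigma_sets (space M) {X -` E \<inter> space M |E. E \<in> sets S} \<subseteq> sets A"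
    "sigma_sets (space M) {Y -` E \<inter> space M |E. E \<in> sets T} \<subseteq> sets B"
    using X Y space by (auto simp: sigma_sets_le_sets_iff[of A, unfolded space(1)]
        sigma_sets_le_sets_iff[of B, unfolded space(2)] dest: measurable_sets)
  then have "indep_set (sigma_sets (space M) {X -` E \<inter> space M |E. E \<in> sets S})
      (sigma_sets (space M) {Y -` E \<inter> space M |E. E \<in> sets T})"
    using indep unfolding indep_set_def by (rule_tac indep_sets_mono_sets) (auto split: bool.split)
  ultimately show ?thesis
    by (simp add: indep_var_eq)
qed

lemma (in prob_space) emeasure_less_indep_var:
  fixes Z L :: "'a \<Rightarrow> 'b::{linorder_topology, second_countable_topology}"
  assumes indep: "indep_var borel Z borel L"
  shows "emeasure M {\<omega>\<in>space M. L \<omega> < Z \<omega>} = (\<integral>\<^sup>+z. emeasure M {\<omega>\<in>space M. L \<omega> < z} \<partial>distr M borel Z)"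
proof -
  have [measurable]: "Z \<in> borel_measurable M" "L \<in> borel_measurable M"
    using indep by (auto dest: indep_var_rv1 indep_var_rv2)
  interpret L: prob_space "distr M borel L"
    by (rule prob_space_distr) measurable
  define P where "P = {p \<in> space (borel \<Otimes>\<^sub>M borel). snd p < (fst p :: 'b)}"
  have [measurable]: "P \<in> sets (borel \<Otimes>\<^sub>M borel)"
    unfolding P_def by measurable
  have "{\<omega>\<in>space M. L \<omega> < Z \<omega>} = (\<lambda>\<omega>. (Z \<omega>, L \<omega>)) -` P \<inter> space M"
    by (auto simp: P_def space_pair_measure)
  then have "emeasure M {\<omega>\<in>space M. L \<omega> < Z \<omega>} = emeasure (distr M (borel \<Otimes>\<^sub>M borel) (\<lambda>\<omega>. (Z \<omega>, L \<omega>))) P"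
    by (simp add: emeasure_distr)
  also have "\<dots> = emeasure (distr M borel Z \<Otimes>\<^sub>M distr M borel L) P"
    using indep by (simp add: indep_var_distribution_eq)
  also have "\<dots> = (\<integral>\<^sup>+z. emeasure (distr M borel L) (Pair z -` P) \<partial>distr M borel Z)"
    by (simp add: L.emeasure_pair_measure_alt)
  also have "\<dots> = (\<integral>\<^sup>+z. emeasure M {\<omega>\<in>space M. L \<omega> < z} \<partial>distr M borel Z)"
  proof (intro nn_integral_cong)
    fix z :: 'b
    have "Pair z -` P = {..<z}"
      by (auto simp: P_def space_pair_measure)
    moreover have "L -` {..<z} \<inter> space M = {\<omega>\<in>space M. L \<omega> < z}"
      by auto
    ultimately show "emeasure (distr M borel L) (Pair z -` P) = emeasure M {\<omega>\<in>space M. L \<omega> < z}"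
      by (simp add: emeasure_distr)
  qed
  finally show ?thesis .
qed

section \<open>First passage times and lifetimes\<close>

lemma Inf_ennreal_eq_INF_rat:
  fixes A :: "real set"
  assumes up: "\<And>s u. s \<in> A \<Longrightarrow> s \<le> u \<Longrightarrow> u \<in> A"
  shows "Inf (ennreal ` A) = (INF q\<in>\<rat>. if q \<in> A then ennreal q else \<top>)"
proof (rule antisym)
  show "Inf (ennreal ` A) \<le> (INF q\<in>\<rat>. if q \<in> A then ennreal q else \<top>)"
    by (intro INF_greatest) (simp add: Inf_lower)
  show "(INF q\<in>\<rat>. if q \<in> A then ennreal q else \<top>) \<le> Inf (ennreal ` A)"
  proof (intro Inf_greatest, clarify)
    fix s assume s: "s \<in> A"
    show "(INF q\<in>\<rat>. if q \<in> A then ennreal q else \<top>) \<le> ennreal s"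
    proof (rule ccontr)
      assume "\<not> ?thesis"
      then have "ennreal s < (INF q\<in>\<rat>. if q \<in> A then ennreal q else \<top>)"
        by (simp add: not_le)
      then obtain z where z: "ennreal s < z" "z < (INF q\<in>\<rat>. if q \<in> A then ennreal q else \<top>)"
        by (blast dest: dense)
      then obtain y where y: "z = ennreal y" "0 \<le> y"
        by (cases z) auto
      have "s < y"
        using z(1) y by (cases "0 \<le> s") (auto simp: ennreal_less_iff)
      then obtain q where q: "q \<in> \<rat>" "s < q" "q < y"
        using Rats_dense_in_real by blast
      have "q \<in> A"
        using up[OF s, of q] q(2) by simp
      then have "(INF q\<in>\<rat>. if q \<in> A then ennreal q else \<top>) \<le> ennreal q"
        using INF_lower[OF q(1), of "\<lambda>q. if q \<in> A then ennreal q else \<top>"] by simp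
      also have "\<dots> \<le> z"
        using q y by (simp add: ennreal_leI)
      finally show False
        using z(2) by simp
    qed
  qed
qed

lemma borel_measurable_Inf_ennreal_upward_closed:
  fixes A :: "'a \<Rightarrow> real set"
  assumes up: "\<And>\<omega> s u. \<omega> \<in> space M \<Longrightarrow> s \<in> A \<omega> \<Longrightarrow> s \<le> u \<Longrightarrow> u \<in> A \<omega>"
    and sets: "\<And>q. q \<in> \<rat> \<Longrightarrow> {\<omega>\<in>space M. q \<in> A \<omega>} \<in> sets M"
  shows "(\<lambda>\<omega>. Inf (ennreal ` A \<omega>)) \<in> borel_measurable M"
proof -
  have "(\<lambda>\<omega>. INF q\<in>\<rat>. if q \<in> A \<omega> then ennreal q else \<top>) \<in> borel_measurable M"
    using sets by (intro borel_measurable_INF countable_rat measurable_If) auto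
  then show ?thesis
  proof (rule measurable_cong[THEN iffD1, rotated])
    fix \<omega> assume "\<omega> \<in> space M"
    then show "(INF q\<in>\<rat>. if q \<in> A \<omega> then ennreal q else \<top>) = Inf (ennreal ` A \<omega>)"
      using up by (intro Inf_ennreal_eq_INF_rat[symmetric]) blast
  qed
qed

abbreviation process_algebra :: "'w measure \<Rightarrow> (real \<Rightarrow> 'w \<Rightarrow> 'e) \<Rightarrow> 'e measure \<Rightarrow> 'w measure" where
  "process_algebra M X S \<equiv> vimage_algebra (space M) (\<lambda>\<omega>. \<lambda>t\<in>{0..}. X t \<omega>) (\<Pi>\<^sub>M t\<in>{0..}. S)"

lemma measurable_process_algebra:
  assumes X: "\<And>t. 0 \<le> t \<Longrightarrow> X t \<in> M \<rightarrow>\<^sub>M S" and q: "0 \<le> q"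
  shows "X q \<in> process_algebra M X S \<rightarrow>\<^sub>M S"
proof -
  have "(\<lambda>\<omega>. \<lambda>t\<in>{0..}. X t \<omega>) \<in> process_algebra M X S \<rightarrow>\<^sub>M (\<Pi>\<^sub>M t\<in>{0..}. S)"
  proof (intro measurable_vimage_algebra1 funcsetI)
    fix \<omega> assume "\<omega> \<in> space M"
    then show "(\<lambda>t\<in>{0..}. X t \<omega>) \<in> space (\<Pi>\<^sub>M t\<in>{0..}. S)"
      unfolding space_PiM restrict_PiE_iff by (auto intro!: measurable_space[OF X])
  qed
  then have "(\<lambda>\<omega>. (\<lambda>t\<in>{0..}. X t \<omega>) q) \<in> process_algebra M X S \<rightarrow>\<^sub>M S"
    by (rule measurable_compose) (intro measurable_component_singleton, simp add: q)
  then show ?thesis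
    using q by simp
qed

lemma lifetime_eq_Inf: "lifetime D X \<omega> = Inf (ennreal ` {u. 0 < u \<and> X u \<omega> \<notin> D})"
  unfolding lifetime_def by (rule arg_cong[where f=Inf]) auto

lemma borel_measurable_lifetime:
  assumes X: "\<And>t. 0 \<le> t \<Longrightarrow> X t \<in> N \<rightarrow>\<^sub>M S" and D: "D \<in> sets S"
    and killed: "\<And>\<omega> u. \<omega> \<in> space N \<Longrightarrow> 0 < u \<Longrightarrow> lifetime D X \<omega> \<le> ennreal u \<Longrightarrow> X u \<omega> \<notin> D"
  shows "lifetime D X \<in> borel_measurable N"
  unfolding lifetime_eq_Inf
proof (rule borel_measurable_Inf_ennreal_upward_closed)
  fix \<omega> s u
  assume \<omega>: "\<omega> \<in> space N" and s: "s \<in> {u. 0 < u \<and> X u \<omega> \<notin> D}" and su: "s \<le> u"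
  then have "lifetime D X \<omega> \<le> ennreal u"
    unfolding lifetime_def by (intro Inf_lower2[of "ennreal s"]) auto
  with \<omega> s su show "u \<in> {u. 0 < u \<and> X u \<omega> \<notin> D}"
    using killed by auto
next
  fix q :: real
  show "{\<omega>\<in>space N. q \<in> {u. 0 < u \<and> X u \<omega> \<notin> D}} \<in> sets N"
  proof (cases "0 < q")
    case True
    then have "{\<omega>\<in>space N. q \<in> {u. 0 < u \<and> X u \<omega> \<notin> D}} = X q -` (space S - D) \<inter> space N"
      using X[of q] by (auto dest: measurable_space)
    also have "\<dots> \<in> sets N"
      using X[of q] True D by (intro measurable_sets) auto
    finally show ?thesis .
  qed simp
qed

lemma inverse_subordinator_eq_Inf:
  "inverse_subordinator H t \<omega> = Inf (ennreal ` {s. 0 \<le> s \<and> t < H s \<omega>})"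
  unfolding inverse_subordinator_def by (rule arg_cong[where f=Inf]) auto

lemma borel_measurable_inverse_subordinator:
  assumes H: "\<And>q. 0 \<le> q \<Longrightarrow> H q \<in> borel_measurable N"
    and mono: "\<And>\<omega> s u. \<omega> \<in> space N \<Longrightarrow> 0 \<le> s \<Longrightarrow> s \<le> u \<Longrightarrow> H s \<omega> \<le> H u \<omega>"
  shows "inverse_subordinator H t \<in> borel_measurable N"
  unfolding inverse_subordinator_eq_Inf
proof (rule borel_measurable_Inf_ennreal_upward_closed)
  fix q :: real
  show "{\<omega>\<in>space N. q \<in> {s. 0 \<le> s \<and> t < H s \<omega>}} \<in> sets N"
  proof (cases "0 \<le> q")
    case True
    then have [measurable]: "H q \<in> borel_measurable N"
      by (rule H)
    have "{\<omega>\<in>space N. t < H q \<omega>} \<in> sets N"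
      by measurable
    with True show ?thesis
      by simp
  qed simp
qed (use mono in \<open>fastforce intro: less_le_trans\<close>)

lemma H_le_if_less_inverse_subordinator:
  assumes "0 \<le> s" "ennreal s < inverse_subordinator H t \<omega>"
  shows "H s \<omega> \<le> t"
proof (rule ccontr)
  assume "\<not> H s \<omega> \<le> t"
  then have "inverse_subordinator H t \<omega> \<le> ennreal s"
    using assms(1) unfolding inverse_subordinator_eq_Inf by (intro Inf_lower) auto
  with assms(2) show False
    by simp
qed

section \<open>Stable subordinators and their inverses\<close>

locale alpha_stable_subordinator =
  fixes M :: "'a measure" and \<alpha> :: real and H :: "real \<Rightarrow> 'a \<Rightarrow> real"
  assumes stable_subordinator: "stable_subordinator M \<alpha> H"
    and alpha_pos: "0 < \<alpha>"

sublocale alpha_stable_subordinator \<subseteq> prob_space M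
  using stable_subordinator by (simp add: stable_subordinator_def)

context alpha_stable_subordinator
begin

lemma measurable_H [measurable]: "H t \<in> borel_measurable M"
  using stable_subordinator by (simp add: stable_subordinator_def)

lemma H_zero: "\<omega> \<in> space M \<Longrightarrow> H 0 \<omega> = 0"
  using stable_subordinator by (simp add: stable_subordinator_def)

lemma H_mono: "\<omega> \<in> space M \<Longrightarrow> 0 \<le> s \<Longrightarrow> s \<le> t \<Longrightarrow> H s \<omega> \<le> H t \<omega>"
  using stable_subordinator by (auto simp: stable_subordinator_def intro: mono_onD)

lemma H_nonneg: "\<omega> \<in> space M \<Longrightarrow> 0 \<le> t \<Longrightarrow> 0 \<le> H t \<omega>"
  using H_mono[of \<omega> 0 t] H_zero[of \<omega>] by simp

lemma H_continuous_at_right: "\<omega> \<in> space M \<Longrightarrow> 0 \<le> t \<Longrightarrow> continuous (at_right t) (\<lambda>s. H s \<omega>)"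
  using stable_subordinator by (simp add: stable_subordinator_def)

lemma laplace_H: "0 \<le> t \<Longrightarrow> 0 < l \<Longrightarrow> expectation (\<lambda>\<omega>. exp (- l * H t \<omega>)) = exp (- t * l powr \<alpha>)"
  using stable_subordinator by (simp add: stable_subordinator_def)

lemma integrable_exp_H: "0 \<le> t \<Longrightarrow> 0 \<le> l \<Longrightarrow> integrable M (\<lambda>\<omega>. exp (- l * H t \<omega>))"
  using H_nonneg by (intro integrable_const_bound[where B=1] AE_I2) (auto simp: mult_nonneg_nonneg)

lemma nn_integral_exp_H:
  assumes "0 \<le> t" "0 < l"
  shows "(\<integral>\<^sup>+\<omega>. ennreal (exp (- l * H t \<omega>)) \<partial>M) = ennreal (exp (- t * l powr \<alpha>))"
proof -
  have "(\<integral>\<^sup>+\<omega>. ennreal (exp (- l * H t \<omega>)) \<partial>M) = ennreal (expectation (\<lambda>\<omega>. exp (- l * H t \<omega>)))"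
    using assms by (intro nn_integral_eq_integral integrable_exp_H) auto
  also have "\<dots> = ennreal (exp (- t * l powr \<alpha>))"
    using assms by (simp only: laplace_H)
  finally show ?thesis .
qed

lemma nn_integral_one_minus_exp_H:
  assumes "0 \<le> t" "0 < l"
  shows "(\<integral>\<^sup>+\<omega>. ennreal (1 - exp (- l * H t \<omega>)) \<partial>M) = ennreal (1 - exp (- t * l powr \<alpha>))"
proof -
  have "0 \<le> 1 - exp (- l * H t \<omega>)" if "\<omega> \<in> space M" for \<omega>
    using H_nonneg[OF that assms(1)] assms(2) by simp
  moreover have integrable: "integrable M (\<lambda>\<omega>. 1 - exp (- l * H t \<omega>))"
    using assms by (intro Bochner_Integration.integrable_diff integrable_exp_H) auto
  ultimately have "(\<integral>\<^sup>+\<omega>. ennreal (1 - exp (- l * H t \<omega>)) \<partial>M) = ennreal (expectation (\<lambda>\<omega>. 1 - exp (- l * H t \<omega>)))"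
    by (intro nn_integral_eq_integral AE_I2) auto
  also have "expectation (\<lambda>\<omega>. 1 - exp (- l * H t \<omega>)) = 1 - expectation (\<lambda>\<omega>. exp (- l * H t \<omega>))"
    using assms integrable_exp_H[of t l] by (simp add: prob_space)
  finally show ?thesis
    using assms by (simp only: laplace_H)
qed

lemma prob_H_nonpos_le:
  assumes t: "0 \<le> t" and l: "0 < l"
  shows "prob {\<omega>\<in>space M. H t \<omega> \<le> 0} \<le> exp (- t * l powr \<alpha>)"
proof -
  have N[measurable]: "{\<omega>\<in>space M. H t \<omega> \<le> 0} \<in> events"
    by measurable
  have "prob {\<omega>\<in>space M. H t \<omega> \<le> 0} = expectation (indicator {\<omega>\<in>space M. H t \<omega> \<le> 0})"
    using N by simp
  also have "\<dots> \<le> expectation (\<lambda>\<omega>. exp (- l * H t \<omega>))"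
  proof (rule integral_mono)
    show "integrable M (indicat_real {\<omega>\<in>space M. H t \<omega> \<le> 0})"
      using N by (simp add: emeasure_eq_measure)
    show "integrable M (\<lambda>\<omega>. exp (- l * H t \<omega>))"
      using t l by (intro integrable_exp_H) auto
    show "indicat_real {\<omega>\<in>space M. H t \<omega> \<le> 0} \<omega> \<le> exp (- l * H t \<omega>)" if "\<omega> \<in> space M" for \<omega>
      using H_nonneg[OF that t] by (auto simp: indicator_def)
  qed
  also have "\<dots> = exp (- t * l powr \<alpha>)"
    using t l by (simp only: laplace_H)
  finally show ?thesis .
qed

lemma AE_H_pos:
  assumes t: "0 < t"
  shows "AE \<omega> in M. 0 < H t \<omega>"
proof -
  have "prob {\<omega>\<in>space M. H t \<omega> \<le> 0} \<le> 0 + e" if e: "0 < e" for e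
  proof (cases "e < 1")
    case True
    define c where "c = - ln e / t"
    have c: "0 < c"
      using e t True by (simp add: c_def divide_neg_pos)
    define l where "l = c powr (1 / \<alpha>)"
    have "0 < l" "l powr \<alpha> = c"
      using c alpha_pos by (simp_all add: l_def powr_powr)
    then have "0 < l" "t * l powr \<alpha> = - ln e"
      using t by (simp_all add: c_def)
    then show ?thesis
      using prob_H_nonpos_le[of t l] t e by simp
  next
    case False
    then show ?thesis
      using prob_le_1[of "{\<omega>\<in>space M. H t \<omega> \<le> 0}"] by linarith
  qed
  then have "prob {\<omega>\<in>space M. H t \<omega> \<le> 0} \<le> 0"
    by (rule field_le_epsilon)
  then have "prob {\<omega>\<in>space M. H t \<omega> \<le> 0} = 0"
    by (intro antisym measure_nonneg)
  then show ?thesis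
    by (simp add: prob_eq_0 not_le)
qed

lemma distr_H_scaling:
  assumes s: "0 < s"
  shows "distr M borel (H s) = distr M borel (\<lambda>\<omega>. s powr (1 / \<alpha>) * H 1 \<omega>)"
proof (rule distr_eq_if_laplace_eq)
  fix l :: real
  assume l: "0 < l"
  have "(l * s powr (1 / \<alpha>)) powr \<alpha> = s * l powr \<alpha>"
    using l s alpha_pos by (simp add: powr_mult powr_powr)
  then have "expectation (\<lambda>\<omega>. exp (- l * (s powr (1 / \<alpha>) * H 1 \<omega>))) = exp (- s * l powr \<alpha>)"
    using laplace_H[of 1 "l * s powr (1 / \<alpha>)"] l s by (simp add: mult.assoc)
  then show "expectation (\<lambda>\<omega>. exp (- l * H s \<omega>)) = expectation (\<lambda>\<omega>. exp (- l * (s powr (1 / \<alpha>) * H 1 \<omega>)))"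
    using laplace_H[of s l] l s by simp
qed (use s H_nonneg in auto)

lemma emeasure_H_scaling:
  assumes s: "0 < s" and A: "A \<in> sets borel"
  shows "emeasure M {\<omega>\<in>space M. H s \<omega> \<in> A} = emeasure M {\<omega>\<in>space M. s powr (1 / \<alpha>) * H 1 \<omega> \<in> A}"
proof -
  have "emeasure (distr M borel (H s)) A = emeasure (distr M borel (\<lambda>\<omega>. s powr (1 / \<alpha>) * H 1 \<omega>)) A"
    by (simp add: distr_H_scaling[OF s])
  then show ?thesis
    using A by (simp add: emeasure_distr vimage_def Int_def conj_commute)
qed

lemma nn_integral_H_powr:
  assumes \<alpha>: "\<alpha> \<le> 1" and \<beta>: "0 < \<beta>" "\<beta> < \<alpha>" and s: "0 \<le> s"
  shows "(\<integral>\<^sup>+\<omega>. ennreal (H s \<omega> powr \<beta>) \<partial>M) = ennreal (Gamma (1 - \<beta> / \<alpha>) / Gamma (1 - \<beta>) * s powr (\<beta> / \<alpha>))"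
proof -
  interpret pair_sigma_finite M lborel ..
  have Gamma_pos: "0 < Gamma (1 - \<beta>)" "0 < Gamma (1 - \<beta> / \<alpha>)"
    using \<alpha> \<beta> by (auto intro!: Gamma_real_pos simp: field_simps)
  define g where "g \<omega> l = ennreal ((1 - exp (- l * H s \<omega>)) * l powr (- \<beta> - 1)) * indicator {0<..} l" for \<omega> l
  have expectation_g: "(\<integral>\<^sup>+\<omega>. g \<omega> l \<partial>M) = ennreal ((1 - exp (- s * l powr \<alpha>)) * l powr (- \<beta> - 1)) * indicator {0<..} l"
    for l
  proof (cases "0 < l")
    case True
    have "(\<integral>\<^sup>+\<omega>. g \<omega> l \<partial>M) = (\<integral>\<^sup>+\<omega>. ennreal (1 - exp (- l * H s \<omega>)) * ennreal (l powr (- \<beta> - 1)) \<partial>M)"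
      using True H_nonneg[OF _ s] by (intro nn_integral_cong) (simp add: g_def ennreal_mult mult_nonneg_nonneg)
    also have "\<dots> = ennreal (1 - exp (- s * l powr \<alpha>)) * ennreal (l powr (- \<beta> - 1))"
      using True s nn_integral_one_minus_exp_H[of s l] by (simp add: nn_integral_multc)
    also have "\<dots> = ennreal ((1 - exp (- s * l powr \<alpha>)) * l powr (- \<beta> - 1)) * indicator {0<..} l"
      using True s by (simp add: ennreal_mult)
    finally show ?thesis .
  qed (simp add: g_def)
  have "(\<integral>\<^sup>+\<omega>. ennreal (H s \<omega> powr \<beta>) \<partial>M) = (\<integral>\<^sup>+\<omega>. ennreal (\<beta> / Gamma (1 - \<beta>)) * (\<integral>\<^sup>+l. g \<omega> l \<partial>lborel) \<partial>M)"
    using \<alpha> \<beta> H_nonneg[OF _ s] by (intro nn_integral_cong) (simp add: g_def powr_eq_nn_integral_one_minus_exp)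
  also have "\<dots> = ennreal (\<beta> / Gamma (1 - \<beta>)) * (\<integral>\<^sup>+l. (\<integral>\<^sup>+\<omega>. g \<omega> l \<partial>M) \<partial>lborel)"
    by (simp add: nn_integral_cmult Fubini'[symmetric] g_def)
  also have "\<dots> = ennreal (\<beta> / Gamma (1 - \<beta>)) * ennreal (Gamma (1 - \<beta> / \<alpha>) / \<beta> * s powr (\<beta> / \<alpha>))"
    using \<beta> s nn_integral_one_minus_exp_powr[of \<beta> \<alpha> s] by (simp add: expectation_g)
  also have "\<dots> = ennreal (Gamma (1 - \<beta> / \<alpha>) / Gamma (1 - \<beta>) * s powr (\<beta> / \<alpha>))"
    using \<beta> Gamma_pos by (simp add: ennreal_mult[symmetric] less_imp_neq[symmetric])
  finally show ?thesis .
qed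

lemma nn_integral_H1_powr_neg:
  assumes \<gamma>: "0 < \<gamma>"
  shows "(\<integral>\<^sup>+\<omega>. ennreal (H 1 \<omega> powr (- \<gamma>)) \<partial>M) = ennreal (Gamma (\<gamma> / \<alpha>) / (\<alpha> * Gamma \<gamma>))"
proof -
  interpret pair_sigma_finite M lborel ..
  have Gamma_pos: "0 < Gamma \<gamma>" "0 < Gamma (\<gamma> / \<alpha>)"
    using \<gamma> alpha_pos by (auto intro!: Gamma_real_pos)
  define g where "g \<omega> l = ennreal (l powr (\<gamma> - 1) * exp (- l * H 1 \<omega>)) * indicator {0<..} l" for \<omega> l
  have Gamma_eq: "ennreal (w powr (- \<gamma>))
      = ennreal (1 / Gamma \<gamma>) * (\<integral>\<^sup>+l. ennreal (l powr (\<gamma> - 1) * exp (- l * w)) * indicator {0<..} l \<partial>lborel)"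
    if w: "0 < w" for w
  proof -
    have "(\<integral>\<^sup>+l. ennreal (l powr (\<gamma> - 1) * exp (- l * w)) * indicator {0<..} l \<partial>lborel)
        = (\<integral>\<^sup>+l. ennreal (l powr (\<gamma> - 1) * exp (- w * l powr 1)) * indicator {0<..} l \<partial>lborel)"
      by (intro nn_integral_cong) (auto simp: indicator_def mult.commute)
    also have "\<dots> = ennreal (Gamma (\<gamma> / 1) / 1 * w powr (- \<gamma> / 1))"
      using \<gamma> w by (intro nn_integral_powr_exp_powr) auto
    finally show ?thesis
      using Gamma_pos by (simp add: ennreal_mult[symmetric] less_imp_neq[symmetric])
  qed
  have expectation_g: "(\<integral>\<^sup>+\<omega>. g \<omega> l \<partial>M) = ennreal (l powr (\<gamma> - 1) * exp (- 1 * l powr \<alpha>)) * indicator {0<..} l" for l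
  proof (cases "0 < l")
    case True
    then have "(\<integral>\<^sup>+\<omega>. g \<omega> l \<partial>M) = ennreal (l powr (\<gamma> - 1)) * (\<integral>\<^sup>+\<omega>. ennreal (exp (- l * H 1 \<omega>)) \<partial>M)"
      by (simp add: g_def ennreal_mult nn_integral_cmult)
    with True show ?thesis
      using nn_integral_exp_H[of 1 l] by (simp add: ennreal_mult)
  qed (simp add: g_def)
  have "(\<integral>\<^sup>+\<omega>. ennreal (H 1 \<omega> powr (- \<gamma>)) \<partial>M) = (\<integral>\<^sup>+\<omega>. ennreal (1 / Gamma \<gamma>) * (\<integral>\<^sup>+l. g \<omega> l \<partial>lborel) \<partial>M)"
    using AE_H_pos[of 1] by (intro nn_integral_cong_AE) (auto simp: g_def Gamma_eq)
  also have "\<dots> = ennreal (1 / Gamma \<gamma>) * (\<integral>\<^sup>+l. (\<integral>\<^sup>+\<omega>. g \<omega> l \<partial>M) \<partial>lborel)"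
    by (simp add: nn_integral_cmult Fubini'[symmetric] g_def)
  also have "\<dots> = ennreal (1 / Gamma \<gamma>) * ennreal (Gamma (\<gamma> / \<alpha>) / \<alpha> * 1 powr (- \<gamma> / \<alpha>))"
    using \<gamma> alpha_pos by (simp only: expectation_g nn_integral_powr_exp_powr zero_less_one)
  also have "\<dots> = ennreal (Gamma (\<gamma> / \<alpha>) / (\<alpha> * Gamma \<gamma>))"
    using Gamma_pos alpha_pos by (simp add: ennreal_mult[symmetric])
  finally show ?thesis .
qed

lemma measurable_inverse_subordinator [measurable]: "inverse_subordinator H t \<in> borel_measurable M"
  by (intro borel_measurable_inverse_subordinator measurable_H H_mono)

lemma less_inverse_subordinator:
  assumes \<omega>: "\<omega> \<in> space M" and s: "0 \<le> s" and less: "H s \<omega> < t"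
  shows "ennreal s < inverse_subordinator H t \<omega>"
proof -
  have "((\<lambda>y. H y \<omega>) \<longlongrightarrow> H s \<omega>) (at_right s)"
    using H_continuous_at_right[OF \<omega> s] by (simp add: continuous_within)
  then have "eventually (\<lambda>y. H y \<omega> < t) (at_right s)"
    using less by (rule order_tendstoD(2))
  then obtain b where b: "s < b" "\<And>y. s < y \<Longrightarrow> y < b \<Longrightarrow> H y \<omega> < t"
    unfolding eventually_at_right_field by auto
  have "ennreal b \<le> inverse_subordinator H t \<omega>"
    unfolding inverse_subordinator_eq_Inf
  proof (intro Inf_greatest, clarify)
    fix y :: real
    assume y: "0 \<le> y" "t < H y \<omega>"
    have "\<not> y \<le> s"
      using H_mono[OF \<omega> y(1), of s] less y(2) by auto
    with b y show "ennreal b \<le> ennreal y"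
      by (metis ennreal_leI not_le order.asym)
  qed
  moreover have "ennreal s < ennreal b"
    using s b(1) by (simp add: ennreal_lessI)
  ultimately show ?thesis
    by (rule less_le_trans[rotated])
qed

lemma inverse_subordinator_pos:
  assumes "\<omega> \<in> space M" "0 < t"
  shows "0 < inverse_subordinator H t \<omega>"
  using less_inverse_subordinator[of \<omega> 0 t] assms by (simp add: H_zero)

lemma less_H_if_inverse_subordinator_less:
  assumes \<omega>: "\<omega> \<in> space M" and r: "0 \<le> r" and less: "inverse_subordinator H t \<omega> < ennreal r"
  shows "t < H r \<omega>"
proof -
  obtain s where s: "0 \<le> s" "t < H s \<omega>" "ennreal s < ennreal r"
    using less unfolding inverse_subordinator_eq_Inf Inf_less_iff by auto
  then have "s \<le> r"
    using r by (simp add: ennreal_less_iff)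
  with s show ?thesis
    using H_mono[OF \<omega> s(1)] by fastforce
qed

lemma emeasure_H_below:
  assumes s: "0 < s" and t: "0 < t"
  shows emeasure_H_less: "emeasure M {\<omega>\<in>space M. H s \<omega> < t}
      = emeasure M {\<omega>\<in>space M. ennreal s < ennreal ((t / H 1 \<omega>) powr \<alpha>)}"
    and emeasure_H_le: "emeasure M {\<omega>\<in>space M. H s \<omega> \<le> t}
      = emeasure M {\<omega>\<in>space M. ennreal s \<le> ennreal ((t / H 1 \<omega>) powr \<alpha>)}"
proof -
  have scaling: "emeasure M {\<omega>\<in>space M. H s \<omega> < t} = emeasure M {\<omega>\<in>space M. s powr (1 / \<alpha>) * H 1 \<omega> < t}"
    "emeasure M {\<omega>\<in>space M. H s \<omega> \<le> t} = emeasure M {\<omega>\<in>space M. s powr (1 / \<alpha>) * H 1 \<omega> \<le> t}"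
    using emeasure_H_scaling[OF s, of "{..<t}"] emeasure_H_scaling[OF s, of "{..t}"] by simp_all
  have "AE \<omega> in M. s powr (1 / \<alpha>) * H 1 \<omega> < t \<longleftrightarrow> ennreal s < ennreal ((t / H 1 \<omega>) powr \<alpha>)"
    "AE \<omega> in M. s powr (1 / \<alpha>) * H 1 \<omega> \<le> t \<longleftrightarrow> ennreal s \<le> ennreal ((t / H 1 \<omega>) powr \<alpha>)"
    using AE_H_pos[of 1] powr_inverse_mult_less_iff[OF alpha_pos s _ t] s
    by (auto simp: ennreal_less_iff elim!: eventually_mono)
  then show "emeasure M {\<omega>\<in>space M. H s \<omega> < t}
      = emeasure M {\<omega>\<in>space M. ennreal s < ennreal ((t / H 1 \<omega>) powr \<alpha>)}"
    and "emeasure M {\<omega>\<in>space M. H s \<omega> \<le> t}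
      = emeasure M {\<omega>\<in>space M. ennreal s \<le> ennreal ((t / H 1 \<omega>) powr \<alpha>)}"
    unfolding scaling by (intro emeasure_eq_AE; auto elim!: eventually_mono)+
qed

theorem nn_integral_inverse_subordinator_powr:
  assumes \<beta>: "0 < \<beta>" and t: "0 < t"
  shows "(\<integral>\<^sup>+\<omega>. epow (inverse_subordinator H t \<omega>) \<beta> \<partial>M)
       = ennreal (Gamma (\<beta> + 1) / Gamma (\<beta> * \<alpha> + 1) * t powr (\<alpha> * \<beta>))"
proof -
  define Z where "Z \<omega> = ennreal ((t / H 1 \<omega>) powr \<alpha>)" for \<omega>
  have [measurable]: "Z \<in> borel_measurable M"
    unfolding Z_def by measurable
  have "(\<integral>\<^sup>+\<omega>. epow (inverse_subordinator H t \<omega>) \<beta> \<partial>M) = (\<integral>\<^sup>+\<omega>. epow (Z \<omega>) \<beta> \<partial>M)"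
  proof (rule nn_integral_epow_eq_of_tail_bounds[OF measurable_inverse_subordinator _ \<beta>])
    fix s :: real
    assume s: "0 < s"
    show "emeasure M {\<omega>\<in>space M. ennreal s < Z \<omega>} \<le> emeasure M {\<omega>\<in>space M. ennreal s < inverse_subordinator H t \<omega>}"
      unfolding Z_def emeasure_H_less[OF s t, symmetric] using s
      by (intro emeasure_mono) (auto intro: less_inverse_subordinator)
    show "emeasure M {\<omega>\<in>space M. ennreal s < inverse_subordinator H t \<omega>} \<le> emeasure M {\<omega>\<in>space M. ennreal s \<le> Z \<omega>}"
      unfolding Z_def emeasure_H_le[OF s t, symmetric] using s
      by (intro emeasure_mono) (auto intro: H_le_if_less_inverse_subordinator)
  qed measurable
  also have "\<dots> = (\<integral>\<^sup>+\<omega>. ennreal (t powr (\<alpha> * \<beta>)) * ennreal (H 1 \<omega> powr (- (\<alpha> * \<beta>))) \<partial>M)"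
  proof (rule nn_integral_cong_AE)
    have "epow (ennreal ((t / w) powr \<alpha>)) \<beta> = ennreal (t powr (\<alpha> * \<beta>)) * ennreal (w powr (- (\<alpha> * \<beta>)))"
      if "0 < w" for w
      using that t by (simp add: epow_def powr_powr powr_divide powr_minus_divide ennreal_mult[symmetric])
    then show "AE \<omega> in M. epow (Z \<omega>) \<beta> = ennreal (t powr (\<alpha> * \<beta>)) * ennreal (H 1 \<omega> powr (- (\<alpha> * \<beta>)))"
      using AE_H_pos[of 1] by (auto simp: Z_def elim!: eventually_mono)
  qed
  also have "\<dots> = ennreal (t powr (\<alpha> * \<beta>)) * ennreal (Gamma (\<alpha> * \<beta> / \<alpha>) / (\<alpha> * Gamma (\<alpha> * \<beta>)))"
    using alpha_pos \<beta> by (simp add: nn_integral_cmult nn_integral_H1_powr_neg)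
  also have "\<dots> = ennreal (Gamma (\<beta> + 1) / Gamma (\<beta> * \<alpha> + 1) * t powr (\<alpha> * \<beta>))"
  proof -
    have "Gamma (\<beta> + 1) = \<beta> * Gamma \<beta>" "Gamma (\<beta> * \<alpha> + 1) = (\<beta> * \<alpha>) * Gamma (\<beta> * \<alpha>)"
      using \<beta> alpha_pos by (auto intro!: Gamma_plus1 dest!: nonpos_Ints_nonpos simp: mult_le_0_iff)
    moreover have "0 < Gamma \<beta>" "0 < Gamma (\<beta> * \<alpha>)"
      using \<beta> alpha_pos by (auto intro!: Gamma_real_pos)
    ultimately show ?thesis
      using \<beta> alpha_pos by (simp add: ennreal_mult[symmetric] mult.commute)
  qed
  finally show ?thesis .
qed

lemma lifetime_time_change_le:
  assumes \<omega>: "\<omega> \<in> space M" and t: "0 < t" and c: "c \<notin> D"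
    and killed: "\<And>u. 0 < u \<Longrightarrow> lifetime D X \<omega> \<le> ennreal u \<Longrightarrow> X u \<omega> = c"
    and le: "lifetime D X \<omega> \<le> inverse_subordinator H t \<omega>"
  shows "lifetime D (time_change c X H) \<omega> \<le> ennreal t"
proof -
  have "time_change c X H t \<omega> \<notin> D"
  proof (cases "inverse_subordinator H t \<omega> = \<top>")
    case True
    then show ?thesis
      using c by (simp add: time_change_def)
  next
    case False
    then obtain l where l: "inverse_subordinator H t \<omega> = ennreal l" "0 \<le> l"
      by (cases "inverse_subordinator H t \<omega>") auto
    have "0 < l"
      using inverse_subordinator_pos[OF \<omega> t] l by simp
    moreover have "lifetime D X \<omega> \<le> ennreal l"
      using le l by simp
    ultimately have "X l \<omega> = c"
      by (rule killed)
    then show ?thesis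
      using c l by (simp add: time_change_def)
  qed
  then show ?thesis
    unfolding lifetime_def using t by (intro Inf_lower) auto
qed

lemma emeasure_inverse_subordinator_less:
  assumes \<alpha>: "\<alpha> \<le> 1" and \<beta>: "0 < \<beta>" "\<beta> < \<alpha>" and t: "0 < t"
  shows "emeasure M {\<omega>\<in>space M. inverse_subordinator H t \<omega> < z}
    \<le> ennreal (Gamma (1 - \<beta> / \<alpha>) / Gamma (1 - \<beta>) * t powr (- \<beta>)) * epow z (\<beta> / \<alpha>)"
proof (cases z)
  case top
  define C where "C = Gamma (1 - \<beta> / \<alpha>) / Gamma (1 - \<beta>) * t powr (- \<beta>)"
  have "0 < C"
    unfolding C_def using \<alpha> \<beta> t by (auto intro!: divide_pos_pos Gamma_real_pos simp: field_simps)
  then have "ennreal C * epow z (\<beta> / \<alpha>) = \<top>"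
    using top by (simp add: epow_def ennreal_mult_top)
  then show ?thesis
    by (simp add: C_def)
next
  case (real r)
  have "emeasure M {\<omega>\<in>space M. inverse_subordinator H t \<omega> < z} \<le> emeasure M {\<omega>\<in>space M. t < H r \<omega>}"
    using real by (intro emeasure_mono) (auto intro: less_H_if_inverse_subordinator_less)
  also have "\<dots> = (\<integral>\<^sup>+\<omega>. indicator {\<omega>\<in>space M. t < H r \<omega>} \<omega> \<partial>M)"
    by simp
  also have "\<dots> \<le> (\<integral>\<^sup>+\<omega>. ennreal (t powr (- \<beta>)) * ennreal (H r \<omega> powr \<beta>) \<partial>M)"
  proof (intro nn_integral_mono)
    fix \<omega> assume "\<omega> \<in> space M"
    have "1 \<le> t powr (- \<beta>) * H r \<omega> powr \<beta>" if "t < H r \<omega>"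
    proof -
      have "t powr (- \<beta>) * H r \<omega> powr \<beta> = (H r \<omega> / t) powr \<beta>"
        using t that by (simp add: powr_divide powr_minus_divide)
      also have "1 \<le> \<dots>"
        using t that \<beta> by (intro ge_one_powr_ge_zero) auto
      finally show ?thesis .
    qed
    then show "indicator {\<omega>\<in>space M. t < H r \<omega>} \<omega> \<le> ennreal (t powr (- \<beta>)) * ennreal (H r \<omega> powr \<beta>)"
      by (auto simp: indicator_def ennreal_mult[symmetric] ennreal_leI)
  qed
  also have "\<dots> = ennreal (t powr (- \<beta>)) * ennreal (Gamma (1 - \<beta> / \<alpha>) / Gamma (1 - \<beta>) * r powr (\<beta> / \<alpha>))"
    using \<alpha> \<beta> real by (simp add: nn_integral_cmult nn_integral_H_powr)
  also have "\<dots> = ennreal (Gamma (1 - \<beta> / \<alpha>) / Gamma (1 - \<beta>) * t powr (- \<beta>)) * epow z (\<beta> / \<alpha>)"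
    using \<alpha> \<beta> real by (simp add: epow_def ennreal_mult[symmetric] Gamma_real_pos mult_ac)
  finally show ?thesis .
qed

theorem emeasure_lifetime_time_change_greater:
  assumes X: "\<And>u. 0 \<le> u \<Longrightarrow> X u \<in> M \<rightarrow>\<^sub>M S"
    and indep: "independent_processes M S X borel H"
    and D: "D \<in> sets S" and c: "c \<notin> D"
    and killed: "\<And>\<omega> u. \<omega> \<in> space M \<Longrightarrow> 0 < u \<Longrightarrow> lifetime D X \<omega> \<le> ennreal u \<Longrightarrow> X u \<omega> = c"
    and \<alpha>: "\<alpha> \<le> 1" and \<beta>: "0 < \<beta>" "\<beta> < \<alpha>" and t: "0 < t"
  shows "emeasure M {\<omega>\<in>space M. ennreal t < lifetime D (time_change c X H) \<omega>}
    \<le> ennreal (Gamma (1 - \<beta> / \<alpha>) / Gamma (1 - \<beta>)) * (\<integral>\<^sup>+\<omega>. epow (lifetime D X \<omega>) (\<beta> / \<alpha>) \<partial>M)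
       * ennreal (t powr (- \<beta>))"
proof -
  define C where "C = Gamma (1 - \<beta> / \<alpha>) / Gamma (1 - \<beta>)"
  have C: "0 \<le> C"
    unfolding C_def using \<alpha> \<beta>
    by (auto intro!: divide_nonneg_nonneg less_imp_le[OF Gamma_real_pos] simp: field_simps)
  have lifetime_X: "lifetime D X \<in> borel_measurable (process_algebra M X S)"
    using c killed by (intro borel_measurable_lifetime[OF measurable_process_algebra[OF X] D]) auto
  have inverse_subordinator_H: "inverse_subordinator H t \<in> borel_measurable (process_algebra M H borel)"
    by (intro borel_measurable_inverse_subordinator measurable_process_algebra measurable_H) (auto intro: H_mono)
  have indep_var: "indep_var borel (lifetime D X) borel (inverse_subordinator H t)"
    using indep lifetime_X inverse_subordinator_H unfolding independent_processes_def
    by (intro indep_var_if_indep_set) auto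
  then have [measurable]: "lifetime D X \<in> borel_measurable M"
    by (rule indep_var_rv1)
  have "emeasure M {\<omega>\<in>space M. ennreal t < lifetime D (time_change c X H) \<omega>}
      \<le> emeasure M {\<omega>\<in>space M. inverse_subordinator H t \<omega> < lifetime D X \<omega>}"
    using lifetime_time_change_le[OF _ t c killed] by (intro emeasure_mono) (auto simp: not_le[symmetric])
  also have "\<dots> = (\<integral>\<^sup>+z. emeasure M {\<omega>\<in>space M. inverse_subordinator H t \<omega> < z} \<partial>distr M borel (lifetime D X))"
    by (rule emeasure_less_indep_var[OF indep_var])
  also have "\<dots> \<le> (\<integral>\<^sup>+z. ennreal (C * t powr (- \<beta>)) * epow z (\<beta> / \<alpha>) \<partial>distr M borel (lifetime D X))"
    using emeasure_inverse_subordinator_less[OF \<alpha> \<beta> t] by (intro nn_integral_mono) (simp add: C_def)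
  also have "\<dots> = ennreal (C * t powr (- \<beta>)) * (\<integral>\<^sup>+z. epow z (\<beta> / \<alpha>) \<partial>distr M borel (lifetime D X))"
    by (rule nn_integral_cmult) measurable
  also have "(\<integral>\<^sup>+z. epow z (\<beta> / \<alpha>) \<partial>distr M borel (lifetime D X)) = (\<integral>\<^sup>+\<omega>. epow (lifetime D X \<omega>) (\<beta> / \<alpha>) \<partial>M)"
    by (rule nn_integral_distr) measurable
  also have "ennreal (C * t powr (- \<beta>)) * (\<integral>\<^sup>+\<omega>. epow (lifetime D X \<omega>) (\<beta> / \<alpha>) \<partial>M)
      = ennreal C * (\<integral>\<^sup>+\<omega>. epow (lifetime D X \<omega>) (\<beta> / \<alpha>) \<partial>M) * ennreal (t powr (- \<beta>))"
    using C by (simp add: ennreal_mult mult_ac)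
  finally show ?thesis
    by (simp only: C_def)
qed

end

theorem mainTheorem2:
  fixes \<alpha> :: real
    and M :: "'a measure" and H\<^sub>1 :: "real \<Rightarrow> 'a \<Rightarrow> real" and \<beta>\<^sub>1 :: real
    and P :: "'d \<Rightarrow> 'w measure" and S :: "'d measure" and X :: "real \<Rightarrow> 'w \<Rightarrow> 'd"
    and D :: "'d set" and c :: 'd and H :: "real \<Rightarrow> 'w \<Rightarrow> real" and x :: 'd and \<beta> :: real
  assumes "0 < \<alpha>" and "\<alpha> < 1"
  shows
    "(stable_subordinator M \<alpha> H\<^sub>1 \<and> 0 < \<beta>\<^sub>1 \<and> \<beta>\<^sub>1 < 1 / \<alpha> \<longrightarrow>
        (\<forall>t>0. (\<integral>\<^sup>+\<omega>. epow (inverse_subordinator H\<^sub>1 t \<omega>) \<beta>\<^sub>1 \<partial>M)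
          = ennreal (Gamma (\<beta>\<^sub>1 + 1) / Gamma (\<beta>\<^sub>1 * \<alpha> + 1) * t powr (\<alpha> * \<beta>\<^sub>1))))
   \<and>
     (markov_process P S X \<and> D \<in> sets S \<and> c \<notin> D \<and> space S = insert c D \<and>
        (\<forall>y\<in>space S. \<forall>\<omega>\<in>space (P y). \<forall>t>0. lifetime D X \<omega> \<le> ennreal t \<longrightarrow> X t \<omega> = c) \<and>
        (\<forall>y\<in>space S. stable_subordinator (P y) \<alpha> H) \<and>
        (\<forall>y\<in>space S. independent_processes (P y) S X borel H) \<and>
        x \<in> D \<and> 0 < \<beta> \<and> \<beta> < \<alpha> \<and>
        lifetime D X \<in> borel_measurable (P x) \<and>
        (\<integral>\<^sup>+\<omega>. epow (lifetime D X \<omega>) (\<beta> / \<alpha>) \<partial>(P x)) < \<top>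
        \<longrightarrow>
        (\<forall>t>0. emeasure (P x) {\<omega>\<in>space (P x). lifetime D (time_change c X H) \<omega> > ennreal t}
           \<le> ennreal (Gamma (1 - \<beta> / \<alpha>) / Gamma (1 - \<beta>))
              * (\<integral>\<^sup>+\<omega>. epow (lifetime D X \<omega>) (\<beta> / \<alpha>) \<partial>(P x))
              * ennreal (t powr (- \<beta>))))"
proof (intro conjI impI allI; elim conjE)
  (* The moment formula holds for every positive exponent. *)
  fix t :: real
  assume "stable_subordinator M \<alpha> H\<^sub>1" "0 < \<beta>\<^sub>1" "0 < t"
  with assms(1) show "(\<integral>\<^sup>+\<omega>. epow (inverse_subordinator H\<^sub>1 t \<omega>) \<beta>\<^sub>1 \<partial>M)
      = ennreal (Gamma (\<beta>\<^sub>1 + 1) / Gamma (\<beta>\<^sub>1 * \<alpha> + 1) * t powr (\<alpha> * \<beta>\<^sub>1))"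
    by (intro alpha_stable_subordinator.nn_integral_inverse_subordinator_powr)
       (simp_all add: alpha_stable_subordinator_def)
next
  fix t :: real
  assume markov: "markov_process P S X" and D: "D \<in> sets S" and c: "c \<notin> D"
    and "space S = insert c D" "x \<in> D"
    and killed: "\<forall>y\<in>space S. \<forall>\<omega>\<in>space (P y). \<forall>t>0. lifetime D X \<omega> \<le> ennreal t \<longrightarrow> X t \<omega> = c"
    and stable: "\<forall>y\<in>space S. stable_subordinator (P y) \<alpha> H"
    and indep: "\<forall>y\<in>space S. independent_processes (P y) S X borel H"
    and \<beta>: "0 < \<beta>" "\<beta> < \<alpha>" and t: "0 < t"
  then have x: "x \<in> space S"
    by simp
  interpret alpha_stable_subordinator "P x" \<alpha> H
    using stable x assms(1) by unfold_locales auto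
  show "emeasure (P x) {\<omega>\<in>space (P x). lifetime D (time_change c X H) \<omega> > ennreal t}
      \<le> ennreal (Gamma (1 - \<beta> / \<alpha>) / Gamma (1 - \<beta>))
        * (\<integral>\<^sup>+\<omega>. epow (lifetime D X \<omega>) (\<beta> / \<alpha>) \<partial>(P x)) * ennreal (t powr (- \<beta>))"
    using markov killed indep x assms(2) \<beta> t
    by (intro emeasure_lifetime_time_change_greater[OF _ _ D c]) (auto simp: markov_process_def)
qed

end
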